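(* Let $S$ be a finite set. The comma category $(k\downarrow *_S)$ is equivalent to the category $\mathrm I_S$ whose objects are connected graphs with set of outer flags equal to $S$, and whose morphisms $\Gamma\to\Gamma'$ are graph morphisms which are composites of isomorphisms and contractions of non-loop edges (i.e. spanning-forest contractions) and whose flag map restricts to the identity on $S$.
   Context: A graph $\Gamma=(F,V,\partial,\imath)$ consists of finite sets $F$ (flags) and $V$ (vertices), a map $\partial:F\to V$ and an involution $\imath$ of $F$; 2-element orbits of $\imath$ are edges, fixed points are outer flags. A graph morphism $\phi:\Gamma\to\Gamma'$ is a triple $(\phi_V,\phi^F,\imath_\phi)$ with $\phi_V:V\to V'$ surjective, $\phi^F:F'\to F$ injective and $\imath_\phi$ a fixed-point-free involution of $F\setminus\phi^F(F')$, such that $\phi_V\partial\phi^F=\partial'$, $\phi_V\partial(f)=\phi_V\partial(\imath_\phi f)$ for $f\notin\phi^F(F')$, each $f\notin\phi^F(F')$ either lies on an edge $\{f,\imath f\}$ with $\imath_\phi f=\imath f$ or $f,\imath_\phi f$ are outer flags, and $\imath\phi^F(f')=\phi^F\imath'(f')$ whenever $\phi^F(f')$ lies on an edge. The simple contraction of an edge $\{s,t\}$ with $\partial s\neq\partial t$ is (quotient $V\to V/(\partial s\sim\partial t)$, inclusion $F\setminus\{s,t\}\hookrightarrow F$, $\imath_\phi(s)=t$). An aggregate is a graph with $\imath=\mathrm{id}$; $*_S$ is the one-vertex aggregate with flags $S$. For distinct outer flags $s,t$ of an aggregate, the virtual edge (if $\partial s\ne\partial t$) resp. loop (if $\partial s=\partial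 t$) contraction is the morphism (quotient $V\to V/(\partial s\sim\partial t)$, inclusion $F\setminus\{s,t\}\hookrightarrow F$, $\imath_\phi(s)=t$). $\mathrm{Agg}^{\rm ctd}$: aggregates with morphisms generated by isomorphisms and virtual edge and loop contractions; $\mathrm{Agg}^{\rm forest}$: generated by isomorphisms and virtual edge contractions; $k$ the inclusion. The comma category $(k\downarrow *_S)$ has objects pairs $(X,\phi)$ with $X$ an aggregate and $\phi:X\to *_S$ in $\mathrm{Agg}^{\rm ctd}$, and morphisms $\psi:X\to X'$ in $\mathrm{Agg}^{\rm forest}$ with $\phi'\psi=\phi$. *)

theory Defs
  imports Main
begin

record ('f,'v) graph =
  flags :: "'f set"
  verts :: "'v set"
  bd    :: "'f \<Rightarrow> 'v"
  gi    :: "'f \<Rightarrow> 'f"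

record ('f,'v) gmor =
  mV :: "'v \<Rightarrow> 'v"
  mF :: "'f \<Rightarrow> 'f"
  mI :: "'f \<Rightarrow> 'f"

text \<open>Well-formed graph; values outside the carriers are fixed to undefined,
  so that graphs and morphisms are determined by their carrier data.\<close>
definition wf_graph :: "('f,'v) graph \<Rightarrow> bool" where
  "wf_graph G \<longleftrightarrow> finite (flags G) \<and> finite (verts G) \<and>
     (\<forall>f\<in>flags G. bd G f \<in> verts G \<and> gi G f \<in> flags G \<and> gi G (gi G f) = f) \<and>
     (\<forall>f. f \<notin> flags G \<longrightarrow> bd G f = undefined \<and> gi G f = undefined)"

definition outer_flags :: "('f,'v) graph \<Rightarrow> 'f set" where
  "outer_flags G = {f\<in>flags G. gi G f = f}"

definition aggregate :: "('f,'v) graph \<Rightarrow> bool" where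
  "aggregate G \<longleftrightarrow> wf_graph G \<and> (\<forall>f\<in>flags G. gi G f = f)"

definition adj :: "('f,'v) graph \<Rightarrow> ('v \<times> 'v) set" where
  "adj G = {(bd G f, bd G (gi G f)) | f. f \<in> flags G \<and> gi G f \<noteq> f}"

definition connected_graph :: "('f,'v) graph \<Rightarrow> bool" where
  "connected_graph G \<longleftrightarrow> wf_graph G \<and> verts G \<noteq> {} \<and>
     (\<forall>v\<in>verts G. \<forall>w\<in>verts G. (v,w) \<in> (adj G)\<^sup>*)"

definition star :: "'f set \<Rightarrow> 'v \<Rightarrow> ('f,'v) graph" where
  "star S v0 = \<lparr> flags = S, verts = {v0},
     bd = (\<lambda>f. if f \<in> S then v0 else undefined),
     gi = (\<lambda>f. if f \<in> S then f else undefined) \<rparr>"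

definition graph_morphism :: "('f,'v) graph \<Rightarrow> ('f,'v) graph \<Rightarrow> ('f,'v) gmor \<Rightarrow> bool" where
  "graph_morphism G H p \<longleftrightarrow> wf_graph G \<and> wf_graph H \<and>
     mV p ` verts G = verts H \<and>
     mF p ` flags H \<subseteq> flags G \<and> inj_on (mF p) (flags H) \<and>
     (\<forall>f\<in>flags G - mF p ` flags H.
         mI p f \<in> flags G - mF p ` flags H \<and> mI p (mI p f) = f \<and> mI p f \<noteq> f) \<and>
     (\<forall>f'\<in>flags H. mV p (bd G (mF p f')) = bd H f') \<and>
     (\<forall>f\<in>flags G - mF p ` flags H. mV p (bd G f) = mV p (bd G (mI p f))) \<and>
     (\<forall>f\<in>flags G - mF p ` flags H.
         (gi G f \<noteq> f \<and> mI p f = gi G f) \<or> (gi G f = f \<and> gi G (mI p f) = mI p f)) \<and>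
     (\<forall>f'\<in>flags H. gi G (mF p f') \<noteq> mF p f' \<longrightarrow> gi G (mF p f') = mF p (gi H f')) \<and>
     (\<forall>v. v \<notin> verts G \<longrightarrow> mV p v = undefined) \<and>
     (\<forall>f'. f' \<notin> flags H \<longrightarrow> mF p f' = undefined) \<and>
     (\<forall>f. f \<notin> flags G - mF p ` flags H \<longrightarrow> mI p f = undefined)"

definition gid :: "('f,'v) graph \<Rightarrow> ('f,'v) gmor" where
  "gid G = \<lparr> mV = (\<lambda>v. if v \<in> verts G then v else undefined),
             mF = (\<lambda>f. if f \<in> flags G then f else undefined),
             mI = (\<lambda>f. undefined) \<rparr>"

definition gcomp :: "('f,'v) graph \<Rightarrow> ('f,'v) graph \<Rightarrow> ('f,'v) graph \<Rightarrow>
                     ('f,'v) gmor \<Rightarrow> ('f,'v) gmor \<Rightarrow> ('f,'v) gmor" where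
  "gcomp G H K q p = \<lparr>
     mV = (\<lambda>v. if v \<in> verts G then mV q (mV p v) else undefined),
     mF = (\<lambda>f. if f \<in> flags K then mF p (mF q f) else undefined),
     mI = (\<lambda>f. if f \<in> flags G - mF p ` mF q ` flags K then
                 (if f \<in> mF p ` flags H then mF p (mI q (inv_into (flags H) (mF p) f))
                  else mI p f)
               else undefined) \<rparr>"

definition graph_iso :: "('f,'v) graph \<Rightarrow> ('f,'v) graph \<Rightarrow> ('f,'v) gmor \<Rightarrow> bool" where
  "graph_iso G H p \<longleftrightarrow> graph_morphism G H p \<and>
     bij_betw (mV p) (verts G) (verts H) \<and> bij_betw (mF p) (flags H) (flags G) \<and>
     (\<forall>f'\<in>flags H. mF p (gi H f') = gi G (mF p f'))"

text \<open>Contraction identifying flags s and t (paired by mI), up to the canonical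
  quotient/inclusion (i.e. up to composing with an isomorphism): mV identifies exactly
  bd s and bd t, mF is a bijection onto F - {s,t}, and the involution of the target
  is the restriction of the involution of the source.\<close>
definition contraction_at :: "('f,'v) graph \<Rightarrow> ('f,'v) graph \<Rightarrow> ('f,'v) gmor \<Rightarrow> 'f \<Rightarrow> 'f \<Rightarrow> bool" where
  "contraction_at G H p s t \<longleftrightarrow> graph_morphism G H p \<and>
     s \<in> flags G \<and> t \<in> flags G \<and> s \<noteq> t \<and>
     mF p ` flags H = flags G - {s,t} \<and> mI p s = t \<and>
     (\<forall>v\<in>verts G. \<forall>w\<in>verts G. mV p v = mV p w \<longleftrightarrow> v = w \<or> {v,w} = {bd G s, bd G t}) \<and>
     (\<forall>f'\<in>flags H. mF p (gi H f') = gi G (mF p f'))"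

definition edge_contraction :: "('f,'v) graph \<Rightarrow> ('f,'v) graph \<Rightarrow> ('f,'v) gmor \<Rightarrow> bool" where
  "edge_contraction G H p \<longleftrightarrow> (\<exists>s t. contraction_at G H p s t \<and> gi G s = t \<and> bd G s \<noteq> bd G t)"

definition virtual_edge_contraction :: "('f,'v) graph \<Rightarrow> ('f,'v) graph \<Rightarrow> ('f,'v) gmor \<Rightarrow> bool" where
  "virtual_edge_contraction X Y p \<longleftrightarrow> aggregate X \<and> aggregate Y \<and>
     (\<exists>s t. contraction_at X Y p s t \<and> bd X s \<noteq> bd X t)"

definition loop_contraction :: "('f,'v) graph \<Rightarrow> ('f,'v) graph \<Rightarrow> ('f,'v) gmor \<Rightarrow> bool" where
  "loop_contraction X Y p \<longleftrightarrow> aggregate X \<and> aggregate Y \<and>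
     (\<exists>s t. contraction_at X Y p s t \<and> bd X s = bd X t)"

definition agg_iso :: "('f,'v) graph \<Rightarrow> ('f,'v) graph \<Rightarrow> ('f,'v) gmor \<Rightarrow> bool" where
  "agg_iso X Y p \<longleftrightarrow> aggregate X \<and> aggregate Y \<and> graph_iso X Y p"

inductive generated ::
  "(('f,'v) graph \<Rightarrow> ('f,'v) graph \<Rightarrow> ('f,'v) gmor \<Rightarrow> bool) \<Rightarrow>
   ('f,'v) graph \<Rightarrow> ('f,'v) graph \<Rightarrow> ('f,'v) gmor \<Rightarrow> bool"
  for P where
  gen_base: "P G H p \<Longrightarrow> generated P G H p"
| gen_comp: "generated P G H p \<Longrightarrow> generated P H K q \<Longrightarrow> generated P G K (gcomp G H K q p)"

definition ctd_morphism :: "('f,'v) graph \<Rightarrow> ('f,'v) graph \<Rightarrow> ('f,'v) gmor \<Rightarrow> bool" where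
  "ctd_morphism = generated (\<lambda>X Y p. agg_iso X Y p \<or> virtual_edge_contraction X Y p \<or> loop_contraction X Y p)"

definition forest_morphism :: "('f,'v) graph \<Rightarrow> ('f,'v) graph \<Rightarrow> ('f,'v) gmor \<Rightarrow> bool" where
  "forest_morphism = generated (\<lambda>X Y p. agg_iso X Y p \<or> virtual_edge_contraction X Y p)"

definition spanning_forest_morphism :: "('f,'v) graph \<Rightarrow> ('f,'v) graph \<Rightarrow> ('f,'v) gmor \<Rightarrow> bool" where
  "spanning_forest_morphism = generated (\<lambda>G H p. graph_iso G H p \<or> edge_contraction G H p)"

definition comma_ob :: "'f set \<Rightarrow> 'v \<Rightarrow> ('f,'v) graph \<times> ('f,'v) gmor \<Rightarrow> bool" where
  "comma_ob S v0 A \<longleftrightarrow> aggregate (fst A) \<and> ctd_morphism (fst A) (star S v0) (snd A)"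

definition comma_hom :: "'f set \<Rightarrow> 'v \<Rightarrow> ('f,'v) graph \<times> ('f,'v) gmor \<Rightarrow>
     ('f,'v) graph \<times> ('f,'v) gmor \<Rightarrow> ('f,'v) gmor \<Rightarrow> bool" where
  "comma_hom S v0 A B psi \<longleftrightarrow> comma_ob S v0 A \<and> comma_ob S v0 B \<and>
     forest_morphism (fst A) (fst B) psi \<and>
     gcomp (fst A) (fst B) (star S v0) (snd B) psi = snd A"

definition comma_id :: "('f,'v) graph \<times> ('f,'v) gmor \<Rightarrow> ('f,'v) gmor" where
  "comma_id A = gid (fst A)"

definition comma_comp :: "('f,'v) graph \<times> ('f,'v) gmor \<Rightarrow> ('f,'v) graph \<times> ('f,'v) gmor \<Rightarrow>
     ('f,'v) graph \<times> ('f,'v) gmor \<Rightarrow> ('f,'v) gmor \<Rightarrow> ('f,'v) gmor \<Rightarrow> ('f,'v) gmor" where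
  "comma_comp A B C g f = gcomp (fst A) (fst B) (fst C) g f"

definition IS_ob :: "'f set \<Rightarrow> ('f,'v) graph \<Rightarrow> bool" where
  "IS_ob S G \<longleftrightarrow> connected_graph G \<and> outer_flags G = S"

definition IS_hom :: "'f set \<Rightarrow> ('f,'v) graph \<Rightarrow> ('f,'v) graph \<Rightarrow> ('f,'v) gmor \<Rightarrow> bool" where
  "IS_hom S G H p \<longleftrightarrow> IS_ob S G \<and> IS_ob S H \<and> graph_morphism G H p \<and>
     spanning_forest_morphism G H p \<and> (\<forall>s\<in>S. mF p s = s)"

definition equivalent_cats ::
  "('a \<Rightarrow> bool) \<Rightarrow> ('a \<Rightarrow> 'a \<Rightarrow> 'm \<Rightarrow> bool) \<Rightarrow> ('a \<Rightarrow> 'm) \<Rightarrow> ('a \<Rightarrow> 'a \<Rightarrow> 'a \<Rightarrow> 'm \<Rightarrow> 'm \<Rightarrow> 'm) \<Rightarrow>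
   ('b \<Rightarrow> bool) \<Rightarrow> ('b \<Rightarrow> 'b \<Rightarrow> 'n \<Rightarrow> bool) \<Rightarrow> ('b \<Rightarrow> 'n) \<Rightarrow> ('b \<Rightarrow> 'b \<Rightarrow> 'b \<Rightarrow> 'n \<Rightarrow> 'n \<Rightarrow> 'n) \<Rightarrow> bool"
  where
  "equivalent_cats ObC HomC IdC CmpC ObD HomD IdD CmpD \<longleftrightarrow>
   (\<exists>(Fo :: 'a \<Rightarrow> 'b) (Fm :: 'a \<Rightarrow> 'a \<Rightarrow> 'm \<Rightarrow> 'n).
      (\<forall>a. ObC a \<longrightarrow> ObD (Fo a)) \<and>
      (\<forall>a b f. ObC a \<longrightarrow> ObC b \<longrightarrow> HomC a b f \<longrightarrow> HomD (Fo a) (Fo b) (Fm a b f)) \<and>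
      (\<forall>a. ObC a \<longrightarrow> Fm a a (IdC a) = IdD (Fo a)) \<and>
      (\<forall>a b c f g. ObC a \<longrightarrow> ObC b \<longrightarrow> ObC c \<longrightarrow> HomC a b f \<longrightarrow> HomC b c g \<longrightarrow>
          Fm a c (CmpC a b c g f) = CmpD (Fo a) (Fo b) (Fo c) (Fm b c g) (Fm a b f)) \<and>
      (\<forall>a b f g. ObC a \<longrightarrow> ObC b \<longrightarrow> HomC a b f \<longrightarrow> HomC a b g \<longrightarrow>
          Fm a b f = Fm a b g \<longrightarrow> f = g) \<and>
      (\<forall>a b h. ObC a \<longrightarrow> ObC b \<longrightarrow> HomD (Fo a) (Fo b) h \<longrightarrow>
          (\<exists>f. HomC a b f \<and> Fm a b f = h)) \<and>
      (\<forall>d. ObD d \<longrightarrow> (\<exists>a u v. ObC a \<and> HomD (Fo a) d u \<and> HomD d (Fo a) v \<and>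
          CmpD (Fo a) d (Fo a) v u = IdD (Fo a) \<and> CmpD d (Fo a) d u v = IdD d)))"

end

theory Submission
  imports Defs
begin

text \<open>The functor sends an object (X, phi) to the graph obtained from X by joining the flags not
  labelled by S into edges along the pairing of phi, and then renaming the flags so that the outer
  ones are the elements of S. Over the star, a virtual edge contraction of X becomes the contraction
  of a genuine non-loop edge of this graph, so forest morphisms become spanning forest morphisms,
  and forgetting the edges reverses this. A morphism of glued graphs respecting the labels of the
  outer flags automatically commutes with the maps to the star, which gives fullness; faithfulness
  holds because the functor is conjugation by the relabelling isomorphisms. The glued graph is
  connected because the fibres of a morphism generated by virtual edge and loop contractions are
  connected through the pairs it contracts. Conversely, contracting the edges of a connected graph
  one at a time, each a virtual edge or loop contraction of its aggregate, exhibits every object of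
  I_S as the graph of an object of the comma category.\<close>

lemma graph_morphismD:
  assumes "graph_morphism G H p"
  shows gm_wf_source: "wf_graph G" and gm_wf_target: "wf_graph H"
    and gm_verts_onto: "mV p ` verts G = verts H"
    and gm_flags_into: "mF p ` flags H \<subseteq> flags G"
    and gm_flags_inj: "inj_on (mF p) (flags H)"
    and gm_pairing: "f \<in> flags G - mF p ` flags H \<Longrightarrow>
        mI p f \<in> flags G - mF p ` flags H \<and> mI p (mI p f) = f \<and> mI p f \<noteq> f"
    and gm_bd: "f' \<in> flags H \<Longrightarrow> mV p (bd G (mF p f')) = bd H f'"
    and gm_pairing_bd: "f \<in> flags G - mF p ` flags H \<Longrightarrow> mV p (bd G f) = mV p (bd G (mI p f))"
    and gm_pairing_kind: "f \<in> flags G - mF p ` flags H \<Longrightarrow>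
        (gi G f \<noteq> f \<and> mI p f = gi G f) \<or> (gi G f = f \<and> gi G (mI p f) = mI p f)"
    and gm_edges: "f' \<in> flags H \<Longrightarrow> gi G (mF p f') \<noteq> mF p f' \<Longrightarrow> gi G (mF p f') = mF p (gi H f')"
    and gm_undef_verts: "v \<notin> verts G \<Longrightarrow> mV p v = undefined"
    and gm_undef_flags: "f' \<notin> flags H \<Longrightarrow> mF p f' = undefined"
    and gm_undef_pairing: "f \<notin> flags G - mF p ` flags H \<Longrightarrow> mI p f = undefined"
  using assms unfolding graph_morphism_def by meson+

lemma gm_vert_in: "graph_morphism G H p \<Longrightarrow> v \<in> verts G \<Longrightarrow> mV p v \<in> verts H"
  using gm_verts_onto by blast

lemma gm_flag_in: "graph_morphism G H p \<Longrightarrow> f \<in> flags H \<Longrightarrow> mF p f \<in> flags G"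
  using gm_flags_into by blast

lemma wf_graphD:
  assumes "wf_graph G"
  shows wf_finite_flags: "finite (flags G)" and wf_finite_verts: "finite (verts G)"
    and wf_bd: "f \<in> flags G \<Longrightarrow> bd G f \<in> verts G"
    and wf_gi: "f \<in> flags G \<Longrightarrow> gi G f \<in> flags G"
    and wf_gi_gi: "f \<in> flags G \<Longrightarrow> gi G (gi G f) = f"
    and wf_undef_bd: "f \<notin> flags G \<Longrightarrow> bd G f = undefined"
    and wf_undef_gi: "f \<notin> flags G \<Longrightarrow> gi G f = undefined"
  using assms unfolding wf_graph_def by auto

lemma graph_morphism_change_involutions:
  assumes p: "graph_morphism G H p"
    and G': "flags G' = flags G" "verts G' = verts G" "bd G' = bd G" "wf_graph G'"
    and H': "flags H' = flags H" "verts H' = verts H" "bd H' = bd H" "wf_graph H'"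
    and kind: "\<And>f. f \<in> flags G - mF p ` flags H \<Longrightarrow>
         (gi G' f \<noteq> f \<and> mI p f = gi G' f) \<or> (gi G' f = f \<and> gi G' (mI p f) = mI p f)"
    and edges: "\<And>f'. f' \<in> flags H \<Longrightarrow> gi G' (mF p f') \<noteq> mF p f' \<Longrightarrow> gi G' (mF p f') = mF p (gi H' f')"
  shows "graph_morphism G' H' p"
  using p[unfolded graph_morphism_def] G'(4) H'(4) kind edges
  unfolding graph_morphism_def G'(1-3) H'(1-3) by (elim conjE) (intro conjI ballI impI; meson)

lemma graph_isoI:
  assumes G: "wf_graph G" and H: "wf_graph H"
    and V: "bij_betw (mV p) (verts G) (verts H)" and F: "bij_betw (mF p) (flags H) (flags G)"
    and bd: "\<And>f'. f' \<in> flags H \<Longrightarrow> mV p (bd G (mF p f')) = bd H f'"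
    and gi: "\<And>f'. f' \<in> flags H \<Longrightarrow> mF p (gi H f') = gi G (mF p f')"
    and uV: "\<And>v. v \<notin> verts G \<Longrightarrow> mV p v = undefined"
    and uF: "\<And>f'. f' \<notin> flags H \<Longrightarrow> mF p f' = undefined"
    and uI: "\<And>f. mI p f = undefined"
  shows "graph_iso G H p"
proof -
  have im: "mF p ` flags H = flags G" and inj: "inj_on (mF p) (flags H)"
    using F by (simp_all add: bij_betw_def)
  have "graph_morphism G H p"
    unfolding graph_morphism_def im Diff_cancel
    using G H V inj bd gi uV uF uI by (simp add: bij_betw_def)
  then show ?thesis unfolding graph_iso_def using V F gi by blast
qed

lemma gcomp_simps:
  "mV (gcomp G H K q p) v = (if v \<in> verts G then mV q (mV p v) else undefined)"
  "mF (gcomp G H K q p) f = (if f \<in> flags K then mF p (mF q f) else undefined)"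
  "mI (gcomp G H K q p) f = (if f \<in> flags G - mF p ` mF q ` flags K then
                 (if f \<in> mF p ` flags H then mF p (mI q (inv_into (flags H) (mF p) f))
                  else mI p f)
               else undefined)"
  by (simp_all add: gcomp_def)

lemma gcomp_mV_in: "v \<in> verts G \<Longrightarrow> mV (gcomp G H K q p) v = mV q (mV p v)"
  by (simp add: gcomp_def)

lemma gcomp_mF_in: "f \<in> flags K \<Longrightarrow> mF (gcomp G H K q p) f = mF p (mF q f)"
  by (simp add: gcomp_def)

lemma gcomp_mF_image:
  "mF q ` flags K \<subseteq> flags H \<Longrightarrow> mF (gcomp G H K q p) ` flags K = mF p ` mF q ` flags K"
  by (auto simp: gcomp_simps image_iff)

lemma gcomp_mI_in:
  assumes "f \<in> flags G - mF p ` mF q ` flags K" "f = mF p h" "h \<in> flags H" "inj_on (mF p) (flags H)"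
  shows "mI (gcomp G H K q p) f = mF p (mI q h)"
  using assms by (auto simp: gcomp_def inv_into_f_f)

lemma gcomp_mI_out:
  "f \<in> flags G - mF p ` mF q ` flags K \<Longrightarrow> f \<notin> mF p ` flags H \<Longrightarrow> mI (gcomp G H K q p) f = mI p f"
  by (simp add: gcomp_def)

lemma gcomp_mI_undef:
  "f \<notin> flags G - mF p ` mF q ` flags K \<Longrightarrow> mI (gcomp G H K q p) f = undefined"
  unfolding gcomp_def by (simp only: gmor.select_convs if_False)

lemma gcomp_cong:
  "verts G' = verts G \<Longrightarrow> flags G' = flags G \<Longrightarrow> flags H' = flags H \<Longrightarrow> flags K' = flags K \<Longrightarrow>
   gcomp G' H' K' = gcomp G H K"
  by (simp add: gcomp_def fun_eq_iff)

lemma gcomp_unpulled_flags: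
  assumes p: "graph_morphism G H p" and q: "graph_morphism H K q"
  shows "flags G - mF (gcomp G H K q p) ` flags K =
         (flags G - mF p ` flags H) \<union> mF p ` (flags H - mF q ` flags K)"
proof -
  have "mF p ` mF q ` flags K \<inter> mF p ` (flags H - mF q ` flags K) = {}"
    using gm_flags_into[OF q] by (blast dest: inj_onD[OF gm_flags_inj[OF p]])
  then show ?thesis
    using gm_flags_into[OF p] gm_flags_into[OF q] unfolding gcomp_mF_image[OF gm_flags_into[OF q]]
    by blast
qed

lemma gcomp_mI_pulled:
  assumes p: "graph_morphism G H p" and q: "graph_morphism H K q" and h: "h \<in> flags H - mF q ` flags K"
  shows "mI (gcomp G H K q p) (mF p h) = mF p (mI q h)"
proof (rule gcomp_mI_in[OF _ refl _ gm_flags_inj[OF p]])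
  show "mF p h \<in> flags G - mF p ` mF q ` flags K"
    using h gm_flag_in[OF p] gm_flags_into[OF q] by (blast dest: inj_onD[OF gm_flags_inj[OF p]])
qed (use h in blast)

lemma gcomp_mI_unpulled:
  assumes q: "graph_morphism H K q" and f: "f \<in> flags G - mF p ` flags H"
  shows "mI (gcomp G H K q p) f = mI p f"
  using f gm_flags_into[OF q] by (intro gcomp_mI_out) blast+

lemma gcomp_cases_unpulled:
  assumes p: "graph_morphism G H p" and q: "graph_morphism H K q"
    and f: "f \<in> flags G - mF (gcomp G H K q p) ` flags K"
  obtains "f \<in> flags G - mF p ` flags H" "mI (gcomp G H K q p) f = mI p f"
  | h where "h \<in> flags H - mF q ` flags K" "f = mF p h" "mI (gcomp G H K q p) f = mF p (mI q h)"
proof -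
  from f[unfolded gcomp_unpulled_flags[OF p q]] show thesis
  proof
    assume f': "f \<in> flags G - mF p ` flags H"
    show thesis by (rule that(1)[OF f' gcomp_mI_unpulled[OF q f']])
  next
    assume "f \<in> mF p ` (flags H - mF q ` flags K)"
    then obtain h where h: "h \<in> flags H - mF q ` flags K" and fh: "f = mF p h" by blast
    show thesis by (rule that(2)[OF h fh]) (use gcomp_mI_pulled[OF p q h] fh in simp)
  qed
qed

lemma gm_outer_pulled_outer:
  assumes p: "graph_morphism G H p" and h: "h \<in> flags H" and outer: "gi H h = h"
  shows "gi G (mF p h) = mF p h"
proof (rule ccontr)
  assume "gi G (mF p h) \<noteq> mF p h"
  with gm_edges[OF p h] have "gi G (mF p h) = mF p (gi H h)" .
  with outer \<open>gi G (mF p h) \<noteq> mF p h\<close> show False by simp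
qed

lemma gm_edge_pulled_outer:
  assumes p: "graph_morphism G H p" and h: "h \<in> flags H" and edge: "gi H h \<noteq> h"
    and outer: "gi G (mF p h) = mF p h"
  shows "gi G (mF p (gi H h)) = mF p (gi H h)"
proof (rule ccontr)
  have h': "gi H h \<in> flags H" "gi H (gi H h) = h"
    using wf_gi[OF gm_wf_target[OF p] h] wf_gi_gi[OF gm_wf_target[OF p] h] .
  assume "gi G (mF p (gi H h)) \<noteq> mF p (gi H h)"
  from gm_edges[OF p h'(1) this] have "gi G (mF p (gi H h)) = mF p h" unfolding h'(2) .
  then have "mF p (gi H h) = mF p h"
    using outer wf_gi_gi[OF gm_wf_source[OF p] gm_flag_in[OF p h'(1)]] by simp
  then show False using inj_onD[OF gm_flags_inj[OF p] _ h'(1) h] edge by blast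
qed

lemma gcomp_pairing_kind:
  assumes p: "graph_morphism G H p" and q: "graph_morphism H K q"
    and f: "f \<in> flags G - mF (gcomp G H K q p) ` flags K"
  shows "(gi G f \<noteq> f \<and> mI (gcomp G H K q p) f = gi G f) \<or>
         (gi G f = f \<and> gi G (mI (gcomp G H K q p) f) = mI (gcomp G H K q p) f)"
proof (rule gcomp_cases_unpulled[OF p q f])
  assume f': "f \<in> flags G - mF p ` flags H" and r: "mI (gcomp G H K q p) f = mI p f"
  show ?thesis unfolding r by (rule gm_pairing_kind[OF p f'])
next
  fix h assume h: "h \<in> flags H - mF q ` flags K" and fh: "f = mF p h"
    and r: "mI (gcomp G H K q p) f = mF p (mI q h)"
  have hH: "h \<in> flags H" and mq: "mI q h \<in> flags H" using h gm_pairing[OF q h] by blast+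
  from gm_pairing_kind[OF q h] show ?thesis
  proof
    assume e: "gi H h \<noteq> h \<and> mI q h = gi H h"
    show ?thesis
    proof (cases "gi G (mF p h) = mF p h")
      case True
      then show ?thesis using gm_edge_pulled_outer[OF p hH _ True] e r fh by simp
    next
      case False
      from gm_edges[OF p hH False] show ?thesis using False e r fh by simp
    qed
  next
    assume "gi H h = h \<and> gi H (mI q h) = mI q h"
    then show ?thesis
      using gm_outer_pulled_outer[OF p hH] gm_outer_pulled_outer[OF p mq] r fh by simp
  qed
qed

lemma gcomp_edges:
  assumes p: "graph_morphism G H p" and q: "graph_morphism H K q" and k: "k \<in> flags K"
    and edge: "gi G (mF (gcomp G H K q p) k) \<noteq> mF (gcomp G H K q p) k"
  shows "gi G (mF (gcomp G H K q p) k) = mF (gcomp G H K q p) (gi K k)"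
proof -
  have qk: "mF q k \<in> flags H" using gm_flag_in[OF q k] .
  have e: "gi G (mF p (mF q k)) \<noteq> mF p (mF q k)" using edge k by (simp add: gcomp_mF_in)
  then have pe: "gi G (mF p (mF q k)) = mF p (gi H (mF q k))" using gm_edges[OF p qk] by blast
  then have "gi H (mF q k) \<noteq> mF q k" using e by auto
  then have "gi H (mF q k) = mF q (gi K k)" using gm_edges[OF q k] by blast
  then show ?thesis
    using pe k wf_gi[OF gm_wf_target[OF q] k] by (simp add: gcomp_mF_in)
qed

lemma gcomp_pairing:
  assumes p: "graph_morphism G H p" and q: "graph_morphism H K q"
    and f: "f \<in> flags G - mF (gcomp G H K q p) ` flags K"
  shows "mI (gcomp G H K q p) f \<in> flags G - mF (gcomp G H K q p) ` flags K \<and>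
    mI (gcomp G H K q p) (mI (gcomp G H K q p) f) = f \<and> mI (gcomp G H K q p) f \<noteq> f"
proof (rule gcomp_cases_unpulled[OF p q f])
  assume f': "f \<in> flags G - mF p ` flags H" and r: "mI (gcomp G H K q p) f = mI p f"
  have "mI p f \<in> flags G - mF p ` flags H" "mI p (mI p f) = f" "mI p f \<noteq> f"
    using gm_pairing[OF p f'] by blast+
  then show ?thesis
    using r gcomp_mI_unpulled[OF q] unfolding gcomp_unpulled_flags[OF p q] by auto
next
  fix h assume h: "h \<in> flags H - mF q ` flags K" and fh: "f = mF p h"
    and r: "mI (gcomp G H K q p) f = mF p (mI q h)"
  have mq: "mI q h \<in> flags H - mF q ` flags K" "mI q (mI q h) = h" "mI q h \<noteq> h"
    using gm_pairing[OF q h] by blast+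
  have "mF p (mI q h) \<noteq> mF p h"
    using mq h by (blast dest: inj_onD[OF gm_flags_inj[OF p]])
  then show ?thesis
    using fh r mq gcomp_mI_pulled[OF p q mq(1)] unfolding gcomp_unpulled_flags[OF p q] by auto
qed

lemma gcomp_pairing_bd:
  assumes p: "graph_morphism G H p" and q: "graph_morphism H K q"
    and f: "f \<in> flags G - mF (gcomp G H K q p) ` flags K"
  shows "mV (gcomp G H K q p) (bd G f) = mV (gcomp G H K q p) (bd G (mI (gcomp G H K q p) f))"
proof (rule gcomp_cases_unpulled[OF p q f])
  assume f': "f \<in> flags G - mF p ` flags H" and r: "mI (gcomp G H K q p) f = mI p f"
  have "mI p f \<in> flags G" using gm_pairing[OF p f'] by blast
  then show ?thesis
    using f' r gm_pairing_bd[OF p f'] wf_bd[OF gm_wf_source[OF p]] by (simp add: gcomp_mV_in)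
next
  fix h assume h: "h \<in> flags H - mF q ` flags K" and fh: "f = mF p h"
    and r: "mI (gcomp G H K q p) f = mF p (mI q h)"
  have pulled_bd: "mV (gcomp G H K q p) (bd G (mF p h')) = mV q (bd H h')" if "h' \<in> flags H" for h'
    using that gm_bd[OF p] wf_bd[OF gm_wf_source[OF p] gm_flag_in[OF p that]] by (simp add: gcomp_mV_in)
  have "mI q h \<in> flags H" using gm_pairing[OF q h] by blast
  then show ?thesis
    using h fh r pulled_bd gm_pairing_bd[OF q h] by simp
qed

lemma gm_comp:
  assumes p: "graph_morphism G H p" and q: "graph_morphism H K q"
  shows "graph_morphism G K (gcomp G H K q p)"
  unfolding graph_morphism_def
proof (intro conjI ballI allI impI)
  let ?r = "gcomp G H K q p"
  show "wf_graph G" "wf_graph K" using gm_wf_source[OF p] gm_wf_target[OF q] .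
  show "mV ?r ` verts G = verts K"
  proof -
    have "mV ?r ` verts G = mV q ` mV p ` verts G"
      unfolding image_image by (rule image_cong) (simp_all add: gcomp_mV_in)
    then show ?thesis by (simp only: gm_verts_onto[OF p] gm_verts_onto[OF q])
  qed
  show "mF ?r ` flags K \<subseteq> flags G"
    unfolding gcomp_mF_image[OF gm_flags_into[OF q]]
    using gm_flags_into[OF p] gm_flags_into[OF q] by (meson image_mono order_trans)
  show "inj_on (mF ?r) (flags K)"
  proof (rule inj_onI)
    fix x y assume x: "x \<in> flags K" and y: "y \<in> flags K" and "mF ?r x = mF ?r y"
    then have "mF p (mF q x) = mF p (mF q y)" by (simp add: gcomp_mF_in)
    then have "mF q x = mF q y" using inj_onD[OF gm_flags_inj[OF p]] gm_flag_in[OF q] x y by blast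
    then show "x = y" using inj_onD[OF gm_flags_inj[OF q]] x y by blast
  qed
  show "mV ?r (bd G (mF ?r f')) = bd K f'" if "f' \<in> flags K" for f'
    using that gm_bd[OF p gm_flag_in[OF q]] gm_bd[OF q]
      wf_bd[OF gm_wf_source[OF p] gm_flag_in[OF p gm_flag_in[OF q]]]
    by (simp add: gcomp_mV_in gcomp_mF_in)
  show "gi G (mF ?r f') = mF ?r (gi K f')" if "f' \<in> flags K" "gi G (mF ?r f') \<noteq> mF ?r f'" for f'
    using gcomp_edges[OF p q that] .
  show "mV ?r v = undefined" if "v \<notin> verts G" for v
    using that by (simp add: gcomp_simps)
  show "mF ?r f' = undefined" if "f' \<notin> flags K" for f'
    using that by (simp add: gcomp_simps)
  show "mI ?r f = undefined" if "f \<notin> flags G - mF ?r ` flags K" for f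
    using gcomp_mI_undef[of f G p q K H] that unfolding gcomp_mF_image[OF gm_flags_into[OF q]] .
  fix f assume f: "f \<in> flags G - mF ?r ` flags K"
  show "mI ?r f \<in> flags G - mF ?r ` flags K" "mI ?r (mI ?r f) = f" "mI ?r f \<noteq> f"
    using gcomp_pairing[OF p q f] by blast+
  show "mV ?r (bd G f) = mV ?r (bd G (mI ?r f))" using gcomp_pairing_bd[OF p q f] .
  show "(gi G f \<noteq> f \<and> mI ?r f = gi G f) \<or> (gi G f = f \<and> gi G (mI ?r f) = mI ?r f)"
    using gcomp_pairing_kind[OF p q f] .
qed

lemma gid_simps:
  "mV (gid G) v = (if v \<in> verts G then v else undefined)"
  "mF (gid G) f = (if f \<in> flags G then f else undefined)"
  "mI (gid G) f = undefined"
  by (simp_all add: gid_def)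

lemma gid_mF_image: "A \<subseteq> flags G \<Longrightarrow> mF (gid G) ` A = A"
  by (force simp: gid_simps)

lemma gid_cong: "verts G' = verts G \<Longrightarrow> flags G' = flags G \<Longrightarrow> gid G' = gid G"
  by (simp add: gid_def)

lemma gid_iso: "wf_graph G \<Longrightarrow> graph_iso G G (gid G)"
  by (rule graph_isoI) (auto simp: gid_simps bij_betw_def inj_on_def wf_bd wf_gi)

lemma gcomp_id_left:
  assumes p: "graph_morphism G H p"
  shows "gcomp G H H (gid H) p = p"
proof (rule gmor.equality)
  show "mV (gcomp G H H (gid H) p) = mV p"
    using gm_vert_in[OF p] gm_undef_verts[OF p] by (auto simp: gcomp_simps gid_simps)
  show "mF (gcomp G H H (gid H) p) = mF p"
    using gm_undef_flags[OF p] by (auto simp: gcomp_simps gid_simps)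
  have "mF p ` mF (gid H) ` flags H = mF p ` flags H" by (simp add: gid_mF_image)
  then show "mI (gcomp G H H (gid H) p) = mI p"
    using gm_undef_pairing[OF p] by (auto simp: gcomp_simps)
qed simp

lemma gcomp_id_right:
  assumes p: "graph_morphism G H p"
  shows "gcomp G G H p (gid G) = p"
proof (rule gmor.equality)
  show "mV (gcomp G G H p (gid G)) = mV p"
    using gm_undef_verts[OF p] by (auto simp: gcomp_simps gid_simps)
  show "mF (gcomp G G H p (gid G)) = mF p"
    using gm_undef_flags[OF p] gm_flag_in[OF p] by (auto simp: gcomp_simps gid_simps)
  have im: "mF (gid G) ` mF p ` flags H = mF p ` flags H"
    using gm_flags_into[OF p] by (simp add: gid_mF_image)
  show "mI (gcomp G G H p (gid G)) = mI p"
  proof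
    fix f
    show "mI (gcomp G G H p (gid G)) f = mI p f"
    proof (cases "f \<in> flags G - mF p ` flags H")
      case True
      have "mI (gcomp G G H p (gid G)) f = mF (gid G) (mI p f)"
        by (rule gcomp_mI_in[of f G "gid G" p H f G]) (use True im in \<open>auto simp: gid_simps inj_on_def\<close>)
      then show ?thesis using gm_pairing[OF p True] by (simp add: gid_simps)
    next
      case False
      then show ?thesis using gcomp_mI_undef[of f G "gid G" p H G] im gm_undef_pairing[OF p] by simp
    qed
  qed
qed simp

lemma gcomp_assoc_mI:
  assumes p: "graph_morphism G H p" and q: "graph_morphism H K q" and r: "graph_morphism K L r"
    and f: "f \<in> flags G - mF (gcomp G K L r (gcomp G H K q p)) ` flags L"
  shows "mI (gcomp G H L (gcomp H K L r q) p) f = mI (gcomp G K L r (gcomp G H K q p)) f"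
proof -
  have qr: "graph_morphism H L (gcomp H K L r q)" using gm_comp[OF q r] .
  have qr_image: "mF (gcomp H K L r q) ` flags L \<subseteq> mF q ` flags K"
    unfolding gcomp_mF_image[OF gm_flags_into[OF r]] using gm_flags_into[OF r] by (rule image_mono)
  show ?thesis
  proof (rule gcomp_cases_unpulled[OF gm_comp[OF p q] r f])
    assume f': "f \<in> flags G - mF (gcomp G H K q p) ` flags K"
      and R: "mI (gcomp G K L r (gcomp G H K q p)) f = mI (gcomp G H K q p) f"
    show ?thesis
    proof (rule gcomp_cases_unpulled[OF p q f'])
      assume "f \<in> flags G - mF p ` flags H" and "mI (gcomp G H K q p) f = mI p f"
      then show ?thesis using R gcomp_mI_unpulled[OF qr] by simp
    next
      fix h assume h: "h \<in> flags H - mF q ` flags K" and fh: "f = mF p h"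
        and "mI (gcomp G H K q p) f = mF p (mI q h)"
      moreover have "h \<in> flags H - mF (gcomp H K L r q) ` flags L" using h qr_image by blast
      ultimately show ?thesis using R gcomp_mI_pulled[OF p qr] gcomp_mI_unpulled[OF r h] by simp
    qed
  next
    fix k assume k: "k \<in> flags K - mF r ` flags L" and fk: "f = mF (gcomp G H K q p) k"
      and R: "mI (gcomp G K L r (gcomp G H K q p)) f = mF (gcomp G H K q p) (mI r k)"
    have kK: "k \<in> flags K" and rk: "mI r k \<in> flags K" using k gm_pairing[OF r k] by blast+
    have "mF q k \<notin> mF (gcomp H K L r q) ` flags L"
      using k gm_flags_into[OF r] unfolding gcomp_mF_image[OF gm_flags_into[OF r]]
      by (blast dest: inj_onD[OF gm_flags_inj[OF q]])
    then have "mF q k \<in> flags H - mF (gcomp H K L r q) ` flags L" using gm_flag_in[OF q kK] by blast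
    then show ?thesis
      using R fk kK rk gcomp_mI_pulled[OF p qr] gcomp_mI_pulled[OF q r k] by (simp add: gcomp_mF_in)
  qed
qed

lemma gcomp_assoc:
  assumes p: "graph_morphism G H p" and q: "graph_morphism H K q" and r: "graph_morphism K L r"
  shows "gcomp G H L (gcomp H K L r q) p = gcomp G K L r (gcomp G H K q p)"
proof (rule gmor.equality)
  show "mV (gcomp G H L (gcomp H K L r q) p) = mV (gcomp G K L r (gcomp G H K q p))"
    using gm_vert_in[OF p] by (auto simp: gcomp_simps)
  show F: "mF (gcomp G H L (gcomp H K L r q) p) = mF (gcomp G K L r (gcomp G H K q p))"
    using gm_flag_in[OF r] by (auto simp: gcomp_simps)
  have "mF (gcomp G H L (gcomp H K L r q) p) ` flags L \<subseteq> flags G"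
    using gm_flags_into[OF gm_comp[OF p gm_comp[OF q r]]] .
  show "mI (gcomp G H L (gcomp H K L r q) p) = mI (gcomp G K L r (gcomp G H K q p))"
  proof
    fix f
    show "mI (gcomp G H L (gcomp H K L r q) p) f = mI (gcomp G K L r (gcomp G H K q p)) f"
    proof (cases "f \<in> flags G - mF (gcomp G K L r (gcomp G H K q p)) ` flags L")
      case True
      then show ?thesis by (rule gcomp_assoc_mI[OF p q r])
    next
      case False
      then show ?thesis
        using gm_undef_pairing[OF gm_comp[OF p gm_comp[OF q r]]]
          gm_undef_pairing[OF gm_comp[OF gm_comp[OF p q] r]] F by simp
    qed
  qed
qed simp
lemma gcomp_inverse_cancel:
  assumes f: "graph_morphism A B f" and r: "graph_morphism B B' r" and r': "graph_morphism B' B r'"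
    and inv: "gcomp B B' B r' r = gid B"
  shows "gcomp A B' B r' (gcomp A B B' r f) = f"
  using gcomp_assoc[OF f r r'] inv gcomp_id_left[OF f] by simp

lemma gcomp_conj_cancel:
  assumes f: "graph_morphism A B f" and ra: "graph_morphism A FA ra" and ra': "graph_morphism FA A ra'"
    and rb: "graph_morphism B FB rb" and rb': "graph_morphism FB B rb'"
    and iA: "gcomp A FA A ra' ra = gid A" and iB: "gcomp B FB B rb' rb = gid B"
  shows "gcomp A FA B (gcomp FA FB B rb' (gcomp FA A FB (gcomp A B FB rb f) ra')) ra = f"
proof -
  have X: "graph_morphism A FB (gcomp A B FB rb f)" by (rule gm_comp[OF f rb])
  have e1: "gcomp FA FB B rb' (gcomp FA A FB (gcomp A B FB rb f) ra') =
      gcomp FA A B (gcomp A FB B rb' (gcomp A B FB rb f)) ra'" using gcomp_assoc[OF ra' X rb'] by simp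
  have e2: "gcomp A FB B rb' (gcomp A B FB rb f) = f" by (rule gcomp_inverse_cancel[OF f rb rb' iB])
  have e3: "gcomp A FA B (gcomp FA A B f ra') ra = gcomp A A B f (gcomp A FA A ra' ra)"
    using gcomp_assoc[OF ra ra' f] by simp
  show ?thesis unfolding e1 e2 e3 iA using gcomp_id_right[OF f] .
qed

lemma gcomp_conj_comp:
  assumes f: "graph_morphism A B f" and g: "graph_morphism B C g" and ra': "graph_morphism FA A ra'"
    and rb: "graph_morphism B FB rb" and rb': "graph_morphism FB B rb'" and rc: "graph_morphism C FC rc"
    and iB: "gcomp B FB B rb' rb = gid B"
  shows "gcomp FA A FC (gcomp A C FC rc (gcomp A B C g f)) ra' =
    gcomp FA FB FC (gcomp FB B FC (gcomp B C FC rc g) rb') (gcomp FA A FB (gcomp A B FB rb f) ra')"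
proof -
  have X: "graph_morphism A FB (gcomp A B FB rb f)" by (rule gm_comp[OF f rb])
  have P: "graph_morphism FA FB (gcomp FA A FB (gcomp A B FB rb f) ra')" by (rule gm_comp[OF ra' X])
  have Q: "graph_morphism B FC (gcomp B C FC rc g)" by (rule gm_comp[OF g rc])
  have e1: "gcomp FA FB FC (gcomp FB B FC (gcomp B C FC rc g) rb') (gcomp FA A FB (gcomp A B FB rb f) ra') =
     gcomp FA B FC (gcomp B C FC rc g) (gcomp FA FB B rb' (gcomp FA A FB (gcomp A B FB rb f) ra'))"
    by (rule gcomp_assoc[OF P rb' Q])
  have e2: "gcomp FA FB B rb' (gcomp FA A FB (gcomp A B FB rb f) ra') =
      gcomp FA A B (gcomp A FB B rb' (gcomp A B FB rb f)) ra'" using gcomp_assoc[OF ra' X rb'] by simp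
  have e3: "gcomp A FB B rb' (gcomp A B FB rb f) = f" by (rule gcomp_inverse_cancel[OF f rb rb' iB])
  have e4: "gcomp FA B FC (gcomp B C FC rc g) (gcomp FA A B f ra') =
      gcomp FA A FC (gcomp A B FC (gcomp B C FC rc g) f) ra'"
    using gcomp_assoc[OF ra' f Q] by simp
  have e5: "gcomp A B FC (gcomp B C FC rc g) f = gcomp A C FC rc (gcomp A B C g f)"
    by (rule gcomp_assoc[OF f g rc])
  show ?thesis unfolding e1 e2 e3 e4 e5 ..
qed

lemma gcomp_conj_id:
  assumes ra: "graph_morphism A FA ra" and iA': "gcomp FA A FA ra ra' = gid FA"
  shows "gcomp FA A FA (gcomp A A FA ra (gid A)) ra' = gid FA"
  using gcomp_id_right[OF ra] iA' by simp

lemma generated_mono: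
  assumes "generated P G H p" and "\<And>G H p. P G H p \<Longrightarrow> Q G H p"
  shows "generated Q G H p"
  using assms(1) by induction (auto intro: generated.intros assms(2))

lemma generated_graph_morphism:
  assumes "generated P G H p" and "\<And>G H p. P G H p \<Longrightarrow> graph_morphism G H p"
  shows "graph_morphism G H p"
  using assms(1) by induction (auto intro: gm_comp assms(2))

lemma graph_iso_morphism: "graph_iso G H p \<Longrightarrow> graph_morphism G H p"
  by (simp add: graph_iso_def)

lemma contraction_at_morphism: "contraction_at G H p s t \<Longrightarrow> graph_morphism G H p"
  by (simp add: contraction_at_def)

lemma ctd_graph_morphism: "ctd_morphism G H p \<Longrightarrow> graph_morphism G H p"
  unfolding ctd_morphism_def
  by (erule generated_graph_morphism)
    (auto simp: agg_iso_def virtual_edge_contraction_def loop_contraction_def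
      intro: graph_iso_morphism contraction_at_morphism)

lemma forest_graph_morphism: "forest_morphism G H p \<Longrightarrow> graph_morphism G H p"
  unfolding forest_morphism_def
  by (erule generated_graph_morphism)
    (auto simp: agg_iso_def virtual_edge_contraction_def intro: graph_iso_morphism contraction_at_morphism)

lemma spanning_forest_graph_morphism: "spanning_forest_morphism G H p \<Longrightarrow> graph_morphism G H p"
  unfolding spanning_forest_morphism_def
  by (erule generated_graph_morphism)
    (auto simp: edge_contraction_def intro: graph_iso_morphism contraction_at_morphism)

lemma ctd_morphism_agg_iso: "agg_iso X Y p \<Longrightarrow> ctd_morphism X Y p"
  unfolding ctd_morphism_def by (auto intro: generated.gen_base)

lemma ctd_morphism_contraction:
  assumes "aggregate X" "aggregate Y" "contraction_at X Y p s t"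
  shows "ctd_morphism X Y p"
proof -
  have "virtual_edge_contraction X Y p \<or> loop_contraction X Y p"
    using assms unfolding virtual_edge_contraction_def loop_contraction_def by blast
  then show ?thesis unfolding ctd_morphism_def by (auto intro: generated.gen_base)
qed

lemma forest_ctd_morphism: "forest_morphism G H p \<Longrightarrow> ctd_morphism G H p"
  unfolding forest_morphism_def ctd_morphism_def by (erule generated_mono) blast

lemma ctd_morphism_comp:
  "ctd_morphism G H p \<Longrightarrow> ctd_morphism H K q \<Longrightarrow> ctd_morphism G K (gcomp G H K q p)"
  unfolding ctd_morphism_def by (rule generated.gen_comp)

lemma spanning_forest_comp: "spanning_forest_morphism G H p \<Longrightarrow> spanning_forest_morphism H K q \<Longrightarrow>
   spanning_forest_morphism G K (gcomp G H K q p)"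
  unfolding spanning_forest_morphism_def by (rule generated.gen_comp)

lemma spanning_forest_iso: "graph_iso G H p \<Longrightarrow> spanning_forest_morphism G H p"
  unfolding spanning_forest_morphism_def by (rule generated.gen_base) simp

lemma star_simps: "flags (star S v0) = S" "verts (star S v0) = {v0}"
  "bd (star S v0) f = (if f \<in> S then v0 else undefined)"
  "gi (star S v0) f = (if f \<in> S then f else undefined)"
  by (simp_all add: star_def)

lemma aggregate_wf: "aggregate X \<Longrightarrow> wf_graph X"
  by (simp add: aggregate_def)

lemma aggregate_star: "finite S \<Longrightarrow> aggregate (star S v0)"
  unfolding aggregate_def wf_graph_def star_simps by auto

subsection \<open>Gluing an aggregate along a morphism to the star\<close>

text \<open>The graph of an object (X, phi) of the comma category, before relabelling: its outer flags
  are the labels mF phi s rather than the elements s of S.\<close>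
definition glue :: "'f set \<Rightarrow> ('f,'v) graph \<Rightarrow> ('f,'v) gmor \<Rightarrow> ('f,'v) graph" where
  "glue S X \<phi> = X\<lparr>gi := (\<lambda>f. if f \<in> flags X then (if f \<in> mF \<phi> ` S then f else mI \<phi> f) else undefined)\<rparr>"

lemma glue_simps:
  "flags (glue S X \<phi>) = flags X" "verts (glue S X \<phi>) = verts X" "bd (glue S X \<phi>) = bd X"
  "gi (glue S X \<phi>) f = (if f \<in> flags X then (if f \<in> mF \<phi> ` S then f else mI \<phi> f) else undefined)"
  by (simp_all add: glue_def)

lemma glue_gi_outer: "f \<in> mF \<phi> ` S \<Longrightarrow> f \<in> flags X \<Longrightarrow> gi (glue S X \<phi>) f = f"
  by (simp add: glue_simps)

lemma glue_gi_unpulled: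
  assumes ph: "graph_morphism X (star S v0) \<phi>" and f: "f \<in> flags X - mF \<phi> ` S"
  shows "gi (glue S X \<phi>) f = mI \<phi> f" "mI \<phi> f \<noteq> f" "mI \<phi> f \<in> flags X - mF \<phi> ` S"
    "mI \<phi> (mI \<phi> f) = f"
  using f gm_pairing[OF ph, unfolded star_simps] by (auto simp: glue_simps)

lemma wf_glue:
  assumes ph: "graph_morphism X (star S v0) \<phi>"
  shows "wf_graph (glue S X \<phi>)"
  unfolding wf_graph_def glue_simps(1-3)
proof (intro conjI ballI allI impI)
  have X: "wf_graph X" using gm_wf_source[OF ph] .
  show "finite (flags X)" "finite (verts X)" using wf_finite_flags[OF X] wf_finite_verts[OF X] .
  fix f
  show "bd X f \<in> verts X" if "f \<in> flags X" using wf_bd[OF X that] .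
  show "bd X f = undefined" if "f \<notin> flags X" using wf_undef_bd[OF X that] .
  show "gi (glue S X \<phi>) f = undefined" if "f \<notin> flags X" using that by (simp add: glue_simps)
  assume f: "f \<in> flags X"
  show "gi (glue S X \<phi>) f \<in> flags X" "gi (glue S X \<phi>) (gi (glue S X \<phi>) f) = f"
  proof (atomize (full), cases "f \<in> mF \<phi> ` S")
    case True
    then show "gi (glue S X \<phi>) f \<in> flags X \<and> gi (glue S X \<phi>) (gi (glue S X \<phi>) f) = f"
      using f by (simp add: glue_gi_outer)
  next
    case False
    then have f': "f \<in> flags X - mF \<phi> ` S" using f by blast
    show "gi (glue S X \<phi>) f \<in> flags X \<and> gi (glue S X \<phi>) (gi (glue S X \<phi>) f) = f"
      using glue_gi_unpulled[OF ph f'] glue_gi_unpulled(1)[OF ph glue_gi_unpulled(3)[OF ph f']] by simp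
  qed
qed

lemma glue_gi_fixed_iff:
  assumes ph: "graph_morphism X (star S v0) \<phi>" and f: "f \<in> flags X"
  shows "gi (glue S X \<phi>) f = f \<longleftrightarrow> f \<in> mF \<phi> ` S"
proof
  assume "gi (glue S X \<phi>) f = f"
  then show "f \<in> mF \<phi> ` S" using glue_gi_unpulled(1,2)[OF ph] f by (metis DiffI)
qed (rule glue_gi_outer[OF _ f])

lemma outer_flags_glue:
  assumes ph: "graph_morphism X (star S v0) \<phi>"
  shows "outer_flags (glue S X \<phi>) = mF \<phi> ` S"
  using glue_gi_fixed_iff[OF ph] gm_flags_into[OF ph]
  unfolding outer_flags_def glue_simps(1) star_simps by blast

lemma glue_comp_outer_flags:
  assumes ph': "graph_morphism Y (star S v0) \<phi>'"
  shows "mF (gcomp X Y (star S v0) \<phi>' p) ` S = mF p ` mF \<phi>' ` S"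
  using gcomp_mF_image[OF gm_flags_into[OF ph'], of X p] by (simp add: star_simps)

lemma glue_gi_contracted:
  assumes p: "graph_morphism X Y p" and ph': "graph_morphism Y (star S v0) \<phi>'"
    and f: "f \<in> flags X - mF p ` flags Y"
  shows "gi (glue S X (gcomp X Y (star S v0) \<phi>' p)) f = mI p f"
proof -
  have "mF \<phi>' ` S \<subseteq> flags Y" using gm_flags_into[OF ph'] by (simp add: star_simps)
  then have "f \<notin> mF (gcomp X Y (star S v0) \<phi>' p) ` S"
    using f unfolding glue_comp_outer_flags[OF ph'] by blast
  moreover have "mI (gcomp X Y (star S v0) \<phi>' p) f = mI p f" by (rule gcomp_mI_unpulled[OF ph' f])
  ultimately show ?thesis using f by (simp add: glue_simps)
qed

lemma glue_gi_pulled: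
  assumes p: "graph_morphism X Y p" and ph': "graph_morphism Y (star S v0) \<phi>'" and f': "f' \<in> flags Y"
  shows "gi (glue S X (gcomp X Y (star S v0) \<phi>' p)) (mF p f') = mF p (gi (glue S Y \<phi>') f')"
proof (cases "f' \<in> mF \<phi>' ` S")
  case True
  then have "mF p f' \<in> mF (gcomp X Y (star S v0) \<phi>' p) ` S" unfolding glue_comp_outer_flags[OF ph'] by blast
  then show ?thesis using True f' gm_flag_in[OF p f'] by (simp add: glue_simps)
next
  case False
  then have f'': "f' \<in> flags Y - mF \<phi>' ` flags (star S v0)" using f' by (simp add: star_simps)
  have "mF p f' \<notin> mF (gcomp X Y (star S v0) \<phi>' p) ` S"
    using False f' gm_flags_into[OF ph'] unfolding glue_comp_outer_flags[OF ph'] star_simps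
    by (blast dest: inj_onD[OF gm_flags_inj[OF p]])
  then show ?thesis
    using False f' gm_flag_in[OF p f'] gcomp_mI_pulled[OF p ph' f''] by (simp add: glue_simps)
qed

lemma glue_morphism:
  assumes p: "graph_morphism X Y p" and ph': "graph_morphism Y (star S v0) \<phi>'"
  shows "graph_morphism (glue S X (gcomp X Y (star S v0) \<phi>' p)) (glue S Y \<phi>') p"
proof (rule graph_morphism_change_involutions[OF p])
  show "wf_graph (glue S X (gcomp X Y (star S v0) \<phi>' p))" "wf_graph (glue S Y \<phi>')"
    using wf_glue[OF gm_comp[OF p ph']] wf_glue[OF ph'] .
  fix f assume f: "f \<in> flags X - mF p ` flags Y"
  have "mI p f \<noteq> f" using gm_pairing[OF p f] by blast
  then show "(gi (glue S X (gcomp X Y (star S v0) \<phi>' p)) f \<noteq> f \<and>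
        mI p f = gi (glue S X (gcomp X Y (star S v0) \<phi>' p)) f) \<or>
      (gi (glue S X (gcomp X Y (star S v0) \<phi>' p)) f = f \<and>
        gi (glue S X (gcomp X Y (star S v0) \<phi>' p)) (mI p f) = mI p f)"
    using glue_gi_contracted[OF p ph' f] by simp
next
  fix f' assume "f' \<in> flags Y"
  then show "gi (glue S X (gcomp X Y (star S v0) \<phi>' p)) (mF p f') = mF p (gi (glue S Y \<phi>') f')"
    by (rule glue_gi_pulled[OF p ph'])
qed (simp_all add: glue_simps)

text \<open>Over the star, the two flags of a virtual edge contraction are paired by the map to the star,
  so in the glued graph they form a genuine edge, which is then contracted.\<close>
lemma forest_generator_glue_spanning_forest:
  assumes gen: "agg_iso X Y p \<or> virtual_edge_contraction X Y p"
    and ph': "graph_morphism Y (star S v0) \<phi>'"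
  shows "spanning_forest_morphism (glue S X (gcomp X Y (star S v0) \<phi>' p)) (glue S Y \<phi>') p"
proof -
  let ?X = "glue S X (gcomp X Y (star S v0) \<phi>' p)" and ?Y = "glue S Y \<phi>'"
  have p: "graph_morphism X Y p"
    using gen by (auto simp: agg_iso_def virtual_edge_contraction_def
        dest: graph_iso_morphism contraction_at_morphism)
  note glued = glue_morphism[OF p ph'] glue_gi_pulled[OF p ph']
  from gen show ?thesis
  proof
    assume "agg_iso X Y p"
    then have "graph_iso ?X ?Y p"
      using glued unfolding graph_iso_def glue_simps(1,2,3) agg_iso_def by simp
    then show ?thesis by (rule spanning_forest_iso)
  next
    assume "virtual_edge_contraction X Y p"
    then obtain s t where c: "contraction_at X Y p s t" and st: "bd X s \<noteq> bd X t"
      unfolding virtual_edge_contraction_def by blast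
    then have "s \<in> flags X - mF p ` flags Y" "mI p s = t" unfolding contraction_at_def by blast+
    then have "gi ?X s = t" using glue_gi_contracted[OF p ph'] by simp
    moreover have "contraction_at ?X ?Y p s t"
      using c glued unfolding contraction_at_def glue_simps by simp
    ultimately have "edge_contraction ?X ?Y p"
      unfolding edge_contraction_def using st unfolding glue_simps(3) by blast
    then show ?thesis unfolding spanning_forest_morphism_def by (auto intro: generated.gen_base)
  qed
qed

lemma forest_glue_spanning_forest:
  assumes "forest_morphism X Y p" and "ctd_morphism Y (star S v0) \<phi>'"
  shows "spanning_forest_morphism (glue S X (gcomp X Y (star S v0) \<phi>' p)) (glue S Y \<phi>') p"
  using assms unfolding forest_morphism_def
proof (induction arbitrary: \<phi>' rule: generated.induct)
  case (gen_base X Y p)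
  then show ?case by (intro forest_generator_glue_spanning_forest ctd_graph_morphism)
next
  case (gen_comp X Y p Z q)
  have fq: "forest_morphism Y Z q" and fp: "forest_morphism X Y p"
    using gen_comp.hyps unfolding forest_morphism_def by blast+
  have p: "graph_morphism X Y p" and q: "graph_morphism Y Z q"
    using forest_graph_morphism fq fp by blast+
  define \<phi> where "\<phi> = gcomp Y Z (star S v0) \<phi>' q"
  have "ctd_morphism Y (star S v0) \<phi>"
    unfolding \<phi>_def by (rule ctd_morphism_comp[OF forest_ctd_morphism[OF fq] gen_comp.prems])
  then have "spanning_forest_morphism (glue S X (gcomp X Y (star S v0) \<phi> p)) (glue S Y \<phi>) p"
    by (rule gen_comp.IH(1))
  moreover have "spanning_forest_morphism (glue S Y \<phi>) (glue S Z \<phi>') q"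
    unfolding \<phi>_def by (rule gen_comp.IH(2)[OF gen_comp.prems])
  ultimately have "spanning_forest_morphism (glue S X (gcomp X Y (star S v0) \<phi> p)) (glue S Z \<phi>')
      (gcomp (glue S X (gcomp X Y (star S v0) \<phi> p)) (glue S Y \<phi>) (glue S Z \<phi>') q p)"
    by (rule spanning_forest_comp)
  moreover have "gcomp X Y (star S v0) \<phi> p = gcomp X Z (star S v0) \<phi>' (gcomp X Y Z q p)"
    unfolding \<phi>_def by (rule gcomp_assoc[OF p q ctd_graph_morphism[OF gen_comp.prems]])
  moreover have "gcomp (glue S X (gcomp X Y (star S v0) \<phi> p)) (glue S Y \<phi>) (glue S Z \<phi>') = gcomp X Y Z"
    by (rule gcomp_cong) (simp_all add: glue_simps)
  ultimately show ?case by simp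
qed

definition forget_edges :: "('f,'v) graph \<Rightarrow> ('f,'v) graph" where
  "forget_edges G = G\<lparr>gi := (\<lambda>f. if f \<in> flags G then f else undefined)\<rparr>"

lemma forget_edges_simps:
  "flags (forget_edges G) = flags G" "verts (forget_edges G) = verts G" "bd (forget_edges G) = bd G"
  "gi (forget_edges G) f = (if f \<in> flags G then f else undefined)"
  by (simp_all add: forget_edges_def)

lemma aggregate_forget_edges: "wf_graph G \<Longrightarrow> aggregate (forget_edges G)"
  unfolding aggregate_def wf_graph_def forget_edges_simps by auto

lemma forget_edges_aggregate: "aggregate X \<Longrightarrow> forget_edges X = X"
  unfolding forget_edges_def aggregate_def wf_graph_def by (cases X) (auto simp: fun_eq_iff)

lemma forget_edges_glue: "forget_edges (glue S X \<phi>) = forget_edges X"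
  unfolding forget_edges_def glue_def by simp

lemma forget_edges_morphism:
  assumes p: "graph_morphism G H p"
  shows "graph_morphism (forget_edges G) (forget_edges H) p"
proof (rule graph_morphism_change_involutions[OF p])
  show "wf_graph (forget_edges G)" "wf_graph (forget_edges H)"
    using aggregate_forget_edges gm_wf_source[OF p] gm_wf_target[OF p] by (auto simp: aggregate_def)
  fix f assume f: "f \<in> flags G - mF p ` flags H"
  have "mI p f \<in> flags G" using gm_pairing[OF p f] by blast
  then show "gi (forget_edges G) f \<noteq> f \<and> mI p f = gi (forget_edges G) f \<or>
      gi (forget_edges G) f = f \<and> gi (forget_edges G) (mI p f) = mI p f"
    using f by (simp add: forget_edges_simps)
next
  fix f' assume "f' \<in> flags H"
  then show "gi (forget_edges G) (mF p f') = mF p (gi (forget_edges H) f')"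
    using gm_flag_in[OF p] by (simp add: forget_edges_simps)
qed (simp_all add: forget_edges_simps)

lemma spanning_forest_generator_forget_edges:
  assumes gen: "graph_iso G H p \<or> edge_contraction G H p"
  shows "forest_morphism (forget_edges G) (forget_edges H) p"
proof -
  have p: "graph_morphism G H p"
    using gen by (auto simp: edge_contraction_def dest: graph_iso_morphism contraction_at_morphism)
  have agg: "aggregate (forget_edges G)" "aggregate (forget_edges H)"
    using aggregate_forget_edges gm_wf_source[OF p] gm_wf_target[OF p] by blast+
  note p' = forget_edges_morphism[OF p]
  have gi: "\<forall>f'\<in>flags (forget_edges H). mF p (gi (forget_edges H) f') = gi (forget_edges G) (mF p f')"
    using gm_flag_in[OF p] by (simp add: forget_edges_simps)
  from gen have "agg_iso (forget_edges G) (forget_edges H) p \<or>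
      virtual_edge_contraction (forget_edges G) (forget_edges H) p"
  proof
    assume "graph_iso G H p"
    then show ?thesis
      using agg p' gi unfolding agg_iso_def graph_iso_def forget_edges_simps by simp
  next
    assume "edge_contraction G H p"
    then obtain s t where c: "contraction_at G H p s t" and st: "bd G s \<noteq> bd G t"
      unfolding edge_contraction_def by blast
    have "contraction_at (forget_edges G) (forget_edges H) p s t"
      using c p' gi unfolding contraction_at_def forget_edges_simps by simp
    then show ?thesis
      unfolding virtual_edge_contraction_def using agg st by (auto simp: forget_edges_simps)
  qed
  then show ?thesis unfolding forest_morphism_def by (auto intro: generated.gen_base)
qed

lemma spanning_forest_forget_edges:
  assumes "spanning_forest_morphism G H p"
  shows "forest_morphism (forget_edges G) (forget_edges H) p"
  using assms unfolding spanning_forest_morphism_def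
proof (induction rule: generated.induct)
  case (gen_base G H p)
  then show ?case by (rule spanning_forest_generator_forget_edges)
next
  case (gen_comp G H p K q)
  have "gcomp (forget_edges G) (forget_edges H) (forget_edges K) = gcomp G H K"
    by (rule gcomp_cong) (simp_all add: forget_edges_simps)
  then show ?case
    using gen_comp.IH generated.gen_comp[of _ "forget_edges G" "forget_edges H" p "forget_edges K" q]
    unfolding forest_morphism_def by simp
qed

subsection \<open>Connectedness of the fibres of a morphism\<close>

definition contracted_pairs :: "('f,'v) graph \<Rightarrow> ('f,'v) graph \<Rightarrow> ('f,'v) gmor \<Rightarrow> ('v \<times> 'v) set" where
  "contracted_pairs X Y p = {(bd X f, bd X (mI p f)) | f. f \<in> flags X - mF p ` flags Y}"

definition fibres_connected :: "('f,'v) graph \<Rightarrow> ('f,'v) graph \<Rightarrow> ('f,'v) gmor \<Rightarrow> bool" where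
  "fibres_connected X Y p \<longleftrightarrow>
     (\<forall>v\<in>verts X. \<forall>w\<in>verts X. mV p v = mV p w \<longrightarrow> (v, w) \<in> (contracted_pairs X Y p)\<^sup>*)"

lemma contracted_pairsI:
  "f \<in> flags X - mF p ` flags Y \<Longrightarrow> (bd X f, bd X (mI p f)) \<in> contracted_pairs X Y p"
  unfolding contracted_pairs_def by blast

lemma contracted_pairs_comp_unpulled:
  assumes p: "graph_morphism X Y p" and q: "graph_morphism Y Z q"
  shows "contracted_pairs X Y p \<subseteq> contracted_pairs X Z (gcomp X Y Z q p)"
proof
  fix e assume "e \<in> contracted_pairs X Y p"
  then obtain f where f: "f \<in> flags X - mF p ` flags Y" and e: "e = (bd X f, bd X (mI p f))"
    unfolding contracted_pairs_def by blast
  have "f \<in> flags X - mF (gcomp X Y Z q p) ` flags Z" using f unfolding gcomp_unpulled_flags[OF p q] by blast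
  then show "e \<in> contracted_pairs X Z (gcomp X Y Z q p)"
    using contracted_pairsI e gcomp_mI_unpulled[OF q f] by metis
qed

lemma contracted_pairs_comp_pulled:
  assumes p: "graph_morphism X Y p" and q: "graph_morphism Y Z q" and g: "g \<in> flags Y - mF q ` flags Z"
  shows "(bd X (mF p g), bd X (mF p (mI q g))) \<in> contracted_pairs X Z (gcomp X Y Z q p)"
proof -
  have "mF p g \<in> flags X - mF (gcomp X Y Z q p) ` flags Z" using g unfolding gcomp_unpulled_flags[OF p q] by blast
  then show ?thesis using contracted_pairsI gcomp_mI_pulled[OF p q g] by metis
qed

lemma contraction_fibres_connected:
  assumes c: "contraction_at X Y p s t"
  shows "fibres_connected X Y p"
  unfolding fibres_connected_def
proof (intro ballI impI)
  fix v w assume vw: "v \<in> verts X" "w \<in> verts X" "mV p v = mV p w"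
  have p: "graph_morphism X Y p" and s: "s \<in> flags X - mF p ` flags Y" and t: "t \<in> flags X - mF p ` flags Y"
    and "mI p s = t" using c unfolding contraction_at_def by auto
  then have "mI p t = s" using gm_pairing[OF p s] by simp
  then have pairs: "(bd X s, bd X t) \<in> contracted_pairs X Y p" "(bd X t, bd X s) \<in> contracted_pairs X Y p"
    using contracted_pairsI[OF s] contracted_pairsI[OF t] \<open>mI p s = t\<close> by simp_all
  have "v = w \<or> {v, w} = {bd X s, bd X t}" using c vw unfolding contraction_at_def by blast
  then show "(v, w) \<in> (contracted_pairs X Y p)\<^sup>*"
    using pairs by (auto simp: doubleton_eq_iff)
qed

text \<open>Each step of the path lifts through a flag pulled back along p, and consecutive lifts are joined
  inside fibres of p, which are connected by pairs that the composite contracts as well.\<close>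
lemma contracted_path_lift:
  assumes p: "graph_morphism X Y p" and q: "graph_morphism Y Z q" and cp: "fibres_connected X Y p"
    and path: "(y1, y2) \<in> (contracted_pairs Y Z q)\<^sup>*"
  shows "\<And>v w. v \<in> verts X \<Longrightarrow> w \<in> verts X \<Longrightarrow> mV p v = y1 \<Longrightarrow> mV p w = y2 \<Longrightarrow>
    (v, w) \<in> (contracted_pairs X Z (gcomp X Y Z q p))\<^sup>*"
  using path
proof (induction rule: rtrancl_induct)
  let ?R = "contracted_pairs X Z (gcomp X Y Z q p)"
  have fibre: "(v, w) \<in> ?R\<^sup>*" if "v \<in> verts X" "w \<in> verts X" "mV p v = mV p w" for v w
    using cp that rtrancl_mono[OF contracted_pairs_comp_unpulled[OF p q]]
    unfolding fibres_connected_def by blast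
  {
    case base
    then show ?case using fibre by simp
  next
    case (step y z)
    from step.hyps(2) obtain g where g: "g \<in> flags Y - mF q ` flags Z"
      and yz: "y = bd Y g" "z = bd Y (mI q g)" unfolding contracted_pairs_def by blast
    have gY: "g \<in> flags Y" and mg: "mI q g \<in> flags Y" using g gm_pairing[OF q g] by blast+
    let ?x = "bd X (mF p g)" and ?x' = "bd X (mF p (mI q g))"
    have x: "?x \<in> verts X" "mV p ?x = y" "?x' \<in> verts X" "mV p ?x' = z"
      unfolding yz using wf_bd[OF gm_wf_source[OF p]] gm_flag_in[OF p] gm_bd[OF p] gY mg by auto
    have "(v, ?x) \<in> ?R\<^sup>*" using step.IH step.prems x by simp
    also have "(?x, ?x') \<in> ?R" by (rule contracted_pairs_comp_pulled[OF p q g])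
    also have "(?x', w) \<in> ?R\<^sup>*" using fibre step.prems x by simp
    finally show ?case .
  }
qed

lemma fibres_connected_comp:
  assumes p: "graph_morphism X Y p" and q: "graph_morphism Y Z q"
    and "fibres_connected X Y p" and cq: "fibres_connected Y Z q"
  shows "fibres_connected X Z (gcomp X Y Z q p)"
  unfolding fibres_connected_def
proof (intro ballI impI)
  fix v w assume v: "v \<in> verts X" and w: "w \<in> verts X"
    and "mV (gcomp X Y Z q p) v = mV (gcomp X Y Z q p) w"
  then have "mV q (mV p v) = mV q (mV p w)" by (simp add: gcomp_mV_in)
  then have "(mV p v, mV p w) \<in> (contracted_pairs Y Z q)\<^sup>*"
    using cq gm_vert_in[OF p v] gm_vert_in[OF p w] unfolding fibres_connected_def by blast
  then show "(v, w) \<in> (contracted_pairs X Z (gcomp X Y Z q p))\<^sup>*"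
    using contracted_path_lift[OF p q assms(3)] v w by blast
qed

lemma ctd_fibres_connected:
  assumes "ctd_morphism X Y p"
  shows "fibres_connected X Y p"
  using assms unfolding ctd_morphism_def
proof (induction rule: generated.induct)
  case (gen_base X Y p)
  show ?case
  proof (cases "agg_iso X Y p")
    case True
    then have "inj_on (mV p) (verts X)" by (simp add: agg_iso_def graph_iso_def bij_betw_def)
    then show ?thesis unfolding fibres_connected_def by (auto dest: inj_onD)
  next
    case False
    then obtain s t where "contraction_at X Y p s t"
      using gen_base unfolding virtual_edge_contraction_def loop_contraction_def by blast
    then show ?thesis by (rule contraction_fibres_connected)
  qed
next
  case (gen_comp X Y p Z q)
  then show ?case
    by (intro fibres_connected_comp) (auto intro: ctd_graph_morphism simp: ctd_morphism_def)
qed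

lemma adj_glue:
  assumes ph: "graph_morphism X (star S v0) \<phi>"
  shows "adj (glue S X \<phi>) = contracted_pairs X (star S v0) \<phi>"
proof -
  have "{(bd X f, bd X (gi (glue S X \<phi>) f)) | f. f \<in> flags X \<and> gi (glue S X \<phi>) f \<noteq> f} =
      {(bd X f, bd X (mI \<phi> f)) | f. f \<in> flags X - mF \<phi> ` S}"
    using glue_gi_fixed_iff[OF ph] glue_gi_unpulled(1)[OF ph] by (metis (no_types, opaque_lifting) DiffD1 DiffD2 DiffI)
  then show ?thesis unfolding adj_def contracted_pairs_def glue_simps star_simps .
qed

lemma connected_glue:
  assumes ph: "ctd_morphism X (star S v0) \<phi>"
  shows "connected_graph (glue S X \<phi>)"
  unfolding connected_graph_def
proof (intro conjI ballI)
  have g: "graph_morphism X (star S v0) \<phi>" using ctd_graph_morphism[OF ph] .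
  have V: "mV \<phi> ` verts X = {v0}" using gm_verts_onto[OF g] unfolding star_simps .
  show "wf_graph (glue S X \<phi>)" by (rule wf_glue[OF g])
  show "verts (glue S X \<phi>) \<noteq> {}" using V by (auto simp: glue_simps)
  fix v w assume "v \<in> verts (glue S X \<phi>)" "w \<in> verts (glue S X \<phi>)"
  then have v: "v \<in> verts X" and w: "w \<in> verts X" by (simp_all add: glue_simps)
  then have "mV \<phi> v = mV \<phi> w" using V by (metis imageI singletonD)
  then show "(v, w) \<in> (adj (glue S X \<phi>))\<^sup>*"
    unfolding adj_glue[OF g] using ctd_fibres_connected[OF ph] v w unfolding fibres_connected_def by blast
qed

definition relabel :: "('f \<Rightarrow> 'f) \<Rightarrow> ('f,'v) graph \<Rightarrow> ('f,'v) graph" where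
  "relabel \<pi> G = \<lparr> flags = \<pi> ` flags G, verts = verts G,
     bd = (\<lambda>f. if f \<in> \<pi> ` flags G then bd G (inv \<pi> f) else undefined),
     gi = (\<lambda>f. if f \<in> \<pi> ` flags G then \<pi> (gi G (inv \<pi> f)) else undefined) \<rparr>"

definition relabel_to :: "('f \<Rightarrow> 'f) \<Rightarrow> ('f,'v) graph \<Rightarrow> ('f,'v) gmor" where
  "relabel_to \<pi> G = \<lparr> mV = (\<lambda>v. if v \<in> verts G then v else undefined),
     mF = (\<lambda>f. if f \<in> \<pi> ` flags G then inv \<pi> f else undefined), mI = (\<lambda>_. undefined) \<rparr>"

definition relabel_from :: "('f \<Rightarrow> 'f) \<Rightarrow> ('f,'v) graph \<Rightarrow> ('f,'v) gmor" where
  "relabel_from \<pi> G = \<lparr> mV = (\<lambda>v. if v \<in> verts G then v else undefined),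
     mF = (\<lambda>f. if f \<in> flags G then \<pi> f else undefined), mI = (\<lambda>_. undefined) \<rparr>"

lemma relabel_simps:
  "flags (relabel \<pi> G) = \<pi> ` flags G" "verts (relabel \<pi> G) = verts G"
  "bd (relabel \<pi> G) f = (if f \<in> \<pi> ` flags G then bd G (inv \<pi> f) else undefined)"
  "gi (relabel \<pi> G) f = (if f \<in> \<pi> ` flags G then \<pi> (gi G (inv \<pi> f)) else undefined)"
  by (simp_all add: relabel_def)

lemma relabel_to_simps:
  "mV (relabel_to \<pi> G) v = (if v \<in> verts G then v else undefined)"
  "mF (relabel_to \<pi> G) f = (if f \<in> \<pi> ` flags G then inv \<pi> f else undefined)"
  "mI (relabel_to \<pi> G) f = undefined"
  by (simp_all add: relabel_to_def)

lemma relabel_from_simps: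
  "mV (relabel_from \<pi> G) v = (if v \<in> verts G then v else undefined)"
  "mF (relabel_from \<pi> G) f = (if f \<in> flags G then \<pi> f else undefined)"
  "mI (relabel_from \<pi> G) f = undefined"
  by (simp_all add: relabel_from_def)

context
  fixes \<pi> :: "'f \<Rightarrow> 'f"
  assumes bij: "bij \<pi>"
begin

lemma relabel_inv_simps: "inv \<pi> (\<pi> x) = x" "\<pi> (inv \<pi> x) = x" "f \<in> \<pi> ` A \<longleftrightarrow> inv \<pi> f \<in> A"
  using bij by (auto simp: bij_is_inj bij_is_surj surj_f_inv_f image_iff) (metis bij bij_is_surj surj_f_inv_f)

lemma wf_relabel: "wf_graph G \<Longrightarrow> wf_graph (relabel \<pi> G)"
  unfolding wf_graph_def relabel_simps by (auto simp: relabel_inv_simps)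

lemma relabel_to_iso:
  assumes G: "wf_graph G"
  shows "graph_iso G (relabel \<pi> G) (relabel_to \<pi> G)"
proof (rule graph_isoI[OF G wf_relabel[OF G]])
  show "bij_betw (mV (relabel_to \<pi> G)) (verts G) (verts (relabel \<pi> G))"
    by (auto simp: bij_betw_def inj_on_def relabel_to_simps relabel_simps)
  show "bij_betw (mF (relabel_to \<pi> G)) (flags (relabel \<pi> G)) (flags G)"
    by (rule bij_betw_byWitness[where f' = \<pi>]) (auto simp: relabel_to_simps relabel_simps relabel_inv_simps)
qed (use wf_bd[OF G] wf_gi[OF G] in \<open>auto simp: relabel_to_simps relabel_simps relabel_inv_simps\<close>)

lemma relabel_from_iso:
  assumes G: "wf_graph G"
  shows "graph_iso (relabel \<pi> G) G (relabel_from \<pi> G)"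
proof (rule graph_isoI[OF wf_relabel[OF G] G])
  show "bij_betw (mV (relabel_from \<pi> G)) (verts (relabel \<pi> G)) (verts G)"
    by (auto simp: bij_betw_def inj_on_def relabel_from_simps relabel_simps)
  show "bij_betw (mF (relabel_from \<pi> G)) (flags G) (flags (relabel \<pi> G))"
    by (rule bij_betw_byWitness[where f' = "inv \<pi>"]) (auto simp: relabel_from_simps relabel_simps relabel_inv_simps)
qed (use wf_bd[OF G] wf_gi[OF G] in \<open>auto simp: relabel_from_simps relabel_simps relabel_inv_simps\<close>)

lemma relabel_from_to: "gcomp G (relabel \<pi> G) G (relabel_from \<pi> G) (relabel_to \<pi> G) = gid G"
proof (rule gmor.equality)
  have "mF (relabel_to \<pi> G) ` mF (relabel_from \<pi> G) ` flags G = flags G"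
    by (force simp: relabel_to_simps relabel_from_simps relabel_inv_simps image_iff)
  then show "mI (gcomp G (relabel \<pi> G) G (relabel_from \<pi> G) (relabel_to \<pi> G)) = mI (gid G)"
    by (simp add: fun_eq_iff gcomp_mI_undef gid_simps)
qed (auto simp: gcomp_simps relabel_to_simps relabel_from_simps gid_simps relabel_inv_simps)

lemma relabel_to_from:
  "gcomp (relabel \<pi> G) G (relabel \<pi> G) (relabel_to \<pi> G) (relabel_from \<pi> G) = gid (relabel \<pi> G)"
proof (rule gmor.equality)
  have "mF (relabel_from \<pi> G) ` mF (relabel_to \<pi> G) ` flags (relabel \<pi> G) = flags (relabel \<pi> G)"
    by (force simp: relabel_to_simps relabel_from_simps relabel_simps relabel_inv_simps image_iff)
  then show "mI (gcomp (relabel \<pi> G) G (relabel \<pi> G) (relabel_to \<pi> G) (relabel_from \<pi> G)) =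
      mI (gid (relabel \<pi> G))"
    by (simp add: fun_eq_iff gcomp_mI_undef gid_simps)
qed (auto simp: gcomp_simps relabel_to_simps relabel_from_simps gid_simps relabel_simps relabel_inv_simps)

lemma adj_relabel:
  assumes G: "wf_graph G"
  shows "adj (relabel \<pi> G) = adj G"
proof -
  have "adj (relabel \<pi> G) = {(bd G g, bd G (gi G g)) | g. g \<in> flags G \<and> \<pi> (gi G g) \<noteq> \<pi> g}"
    unfolding adj_def relabel_simps using wf_gi[OF G]
    by (auto simp: relabel_inv_simps) (metis relabel_inv_simps(1))
  also have "\<dots> = adj G"
    unfolding adj_def using bij_is_inj[OF bij] by (auto simp: inj_eq)
  finally show ?thesis .
qed

lemma connected_relabel: "connected_graph G \<Longrightarrow> connected_graph (relabel \<pi> G)"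
  unfolding connected_graph_def by (auto simp: wf_relabel adj_relabel relabel_simps)

lemma outer_flags_relabel:
  assumes G: "wf_graph G"
  shows "outer_flags (relabel \<pi> G) = \<pi> ` outer_flags G"
  unfolding outer_flags_def relabel_simps using bij_is_inj[OF bij]
  by (auto simp: relabel_inv_simps inj_eq) (metis relabel_inv_simps(1,2))

end

lemma relabel_id: "wf_graph G \<Longrightarrow> relabel id G = G"
  unfolding relabel_def wf_graph_def by (cases G) (auto simp: fun_eq_iff)

definition merge_vertex :: "('f,'v) graph \<Rightarrow> 'f \<Rightarrow> 'f \<Rightarrow> 'v \<Rightarrow> 'v" where
  "merge_vertex d s t v = (if v = bd d t then bd d s else v)"

definition contract_edge :: "('f,'v) graph \<Rightarrow> 'f \<Rightarrow> 'f \<Rightarrow> ('f,'v) graph" where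
  "contract_edge d s t = \<lparr> flags = flags d - {s,t}, verts = merge_vertex d s t ` verts d,
     bd = (\<lambda>f. if f \<in> flags d - {s,t} then merge_vertex d s t (bd d f) else undefined),
     gi = (\<lambda>f. if f \<in> flags d - {s,t} then gi d f else undefined) \<rparr>"

definition contract_edge_map :: "('f,'v) graph \<Rightarrow> 'f \<Rightarrow> 'f \<Rightarrow> ('f,'v) gmor" where
  "contract_edge_map d s t = \<lparr> mV = (\<lambda>v. if v \<in> verts d then merge_vertex d s t v else undefined),
     mF = (\<lambda>f. if f \<in> flags d - {s,t} then f else undefined),
     mI = (\<lambda>f. if f = s then t else if f = t then s else undefined) \<rparr>"

lemma contract_edge_simps:
  "flags (contract_edge d s t) = flags d - {s,t}" "verts (contract_edge d s t) = merge_vertex d s t ` verts d"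
  "bd (contract_edge d s t) f = (if f \<in> flags d - {s,t} then merge_vertex d s t (bd d f) else undefined)"
  "gi (contract_edge d s t) f = (if f \<in> flags d - {s,t} then gi d f else undefined)"
  by (simp_all add: contract_edge_def)

lemma contract_edge_map_simps:
  "mV (contract_edge_map d s t) v = (if v \<in> verts d then merge_vertex d s t v else undefined)"
  "mF (contract_edge_map d s t) f = (if f \<in> flags d - {s,t} then f else undefined)"
  "mI (contract_edge_map d s t) f = (if f = s then t else if f = t then s else undefined)"
  by (simp_all add: contract_edge_map_def)

lemma merge_vertex_simps: "merge_vertex d s t (bd d s) = bd d s" "merge_vertex d s t (bd d t) = bd d s"
  by (simp_all add: merge_vertex_def)

lemma merge_vertex_eq_iff:
  "merge_vertex d s t v = merge_vertex d s t u \<longleftrightarrow> v = u \<or> {v, u} = {bd d s, bd d t}"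
  unfolding merge_vertex_def by (auto simp: doubleton_eq_iff)

lemma rtrancl_map:
  assumes step: "\<And>x y. (x, y) \<in> r \<Longrightarrow> (f x, f y) \<in> s\<^sup>*" and path: "(x, y) \<in> r\<^sup>*"
  shows "(f x, f y) \<in> s\<^sup>*"
  using path by induction (auto intro: rtrancl_trans step)

context
  fixes d :: "('f,'v) graph" and s t :: 'f
  assumes wf: "wf_graph d" and s: "s \<in> flags d" and st: "gi d s = t" and edge: "t \<noteq> s"
begin

lemma edge_partner_flag: "t \<in> flags d" and edge_partner_back: "gi d t = s"
  using wf_gi[OF wf s] wf_gi_gi[OF wf s] st by simp_all

lemma gi_avoids_edge:
  assumes f: "f \<in> flags d - {s, t}"
  shows "gi d f \<in> flags d - {s, t}"
proof -
  have "f = gi d (gi d f)" using wf_gi_gi[OF wf] f by simp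
  then have "gi d f \<noteq> s" "gi d f \<noteq> t" using f st edge_partner_back by auto
  then show ?thesis using wf_gi[OF wf] f by blast
qed

lemma wf_contract_edge: "wf_graph (contract_edge d s t)"
  unfolding wf_graph_def contract_edge_simps
  using wf_finite_flags[OF wf] wf_finite_verts[OF wf] wf_bd[OF wf] wf_gi_gi[OF wf] gi_avoids_edge
  by auto

lemma outer_flags_contract_edge: "outer_flags (contract_edge d s t) = outer_flags d - {s, t}"
  unfolding outer_flags_def contract_edge_simps using edge edge_partner_back st by auto

lemma card_flags_contract_edge: "card (flags (contract_edge d s t)) < card (flags d)"
  unfolding contract_edge_simps by (rule psubset_card_mono[OF wf_finite_flags[OF wf]]) (use s in blast)

lemma adj_contract_edge:
  assumes "(y, z) \<in> adj d"
  shows "(merge_vertex d s t y, merge_vertex d s t z) \<in> (adj (contract_edge d s t))\<^sup>*"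
proof -
  obtain f where f: "f \<in> flags d" "gi d f \<noteq> f" and yz: "y = bd d f" "z = bd d (gi d f)"
    using assms unfolding adj_def by blast
  show ?thesis
  proof (cases "f \<in> {s, t}")
    case True
    then have "merge_vertex d s t y = merge_vertex d s t z"
      using yz st edge_partner_back merge_vertex_simps[of d s t] by auto
    then show ?thesis by simp
  next
    case False
    then have f': "f \<in> flags d - {s, t}" using f by blast
    then have "(bd (contract_edge d s t) f, bd (contract_edge d s t) (gi (contract_edge d s t) f))
        \<in> adj (contract_edge d s t)"
      unfolding adj_def contract_edge_simps(1) using f(2) by (auto simp: contract_edge_simps)
    then show ?thesis using f' gi_avoids_edge[OF f'] yz by (simp add: contract_edge_simps)
  qed
qed

lemma connected_contract_edge:
  assumes c: "connected_graph d"
  shows "connected_graph (contract_edge d s t)"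
  unfolding connected_graph_def
proof (intro conjI ballI)
  show "wf_graph (contract_edge d s t)" by (rule wf_contract_edge)
  show "verts (contract_edge d s t) \<noteq> {}" using c by (auto simp: connected_graph_def contract_edge_simps)
  fix v' w' assume "v' \<in> verts (contract_edge d s t)" "w' \<in> verts (contract_edge d s t)"
  then obtain v w where "v \<in> verts d" "w \<in> verts d" "v' = merge_vertex d s t v" "w' = merge_vertex d s t w"
    by (auto simp: contract_edge_simps)
  moreover have "(v, w) \<in> (adj d)\<^sup>*" using c calculation by (simp add: connected_graph_def)
  ultimately show "(v', w') \<in> (adj (contract_edge d s t))\<^sup>*"
    using rtrancl_map[OF adj_contract_edge] by simp
qed

lemma contract_edge_map_unpulled:
  "flags (forget_edges d) - mF (contract_edge_map d s t) ` flags (forget_edges (contract_edge d s t)) = {s, t}"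
proof -
  have "mF (contract_edge_map d s t) ` (flags d - {s, t}) = flags d - {s, t}"
    by (rule image_cong[of _ _ _ id, simplified]) (simp_all add: contract_edge_map_simps)
  then show ?thesis using s edge_partner_flag by (auto simp: forget_edges_simps contract_edge_simps)
qed

lemma contract_edge_map_morphism:
  "graph_morphism (forget_edges d) (forget_edges (contract_edge d s t)) (contract_edge_map d s t)"
  unfolding graph_morphism_def contract_edge_map_unpulled
proof (intro conjI)
  let ?c = "contract_edge_map d s t"
  show "wf_graph (forget_edges d)" "wf_graph (forget_edges (contract_edge d s t))"
    using aggregate_forget_edges[OF wf] aggregate_forget_edges[OF wf_contract_edge]
    by (simp_all add: aggregate_def)
  show "mV ?c ` verts (forget_edges d) = verts (forget_edges (contract_edge d s t))"
    unfolding forget_edges_simps contract_edge_simps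
    by (rule image_cong) (simp_all add: contract_edge_map_simps)
  show "\<forall>f\<in>{s, t}. mV ?c (bd (forget_edges d) f) = mV ?c (bd (forget_edges d) (mI ?c f))"
    using wf_bd[OF wf s] wf_bd[OF wf edge_partner_flag] edge
    by (auto simp: forget_edges_simps contract_edge_map_simps merge_vertex_simps)
  show "\<forall>f\<in>{s, t}. gi (forget_edges d) f \<noteq> f \<and> mI ?c f = gi (forget_edges d) f \<or>
      gi (forget_edges d) f = f \<and> gi (forget_edges d) (mI ?c f) = mI ?c f"
    using s edge_partner_flag edge by (auto simp: forget_edges_simps contract_edge_map_simps)
qed (use edge wf_bd[OF wf] in \<open>auto simp: inj_on_def forget_edges_simps contract_edge_simps
    contract_edge_map_simps\<close>)

lemma contract_edge_map_ctd:
  "ctd_morphism (forget_edges d) (forget_edges (contract_edge d s t)) (contract_edge_map d s t)"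
proof -
  have "contraction_at (forget_edges d) (forget_edges (contract_edge d s t)) (contract_edge_map d s t) s t"
    unfolding contraction_at_def
    using contract_edge_map_morphism contract_edge_map_unpulled s edge_partner_flag edge
      merge_vertex_eq_iff[of d s t]
    by (auto simp: forget_edges_simps contract_edge_simps contract_edge_map_simps)
  then show ?thesis
    by (rule ctd_morphism_contraction[OF aggregate_forget_edges[OF wf] aggregate_forget_edges[OF wf_contract_edge]])
qed

end

subsection \<open>Every graph of I_S comes from the comma category\<close>

text \<open>phi exhibits d as the graph of the object (forget_edges d, phi) of the comma category.\<close>
definition presents :: "'f set \<Rightarrow> 'v \<Rightarrow> ('f,'v) graph \<Rightarrow> ('f,'v) gmor \<Rightarrow> bool" where
  "presents S v0 d \<phi> \<longleftrightarrow> ctd_morphism (forget_edges d) (star S v0) \<phi> \<and>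
     (\<forall>s\<in>S. mF \<phi> s = s) \<and> (\<forall>f\<in>flags d - S. mI \<phi> f = gi d f)"

lemma edgeless_presents:
  assumes c: "connected_graph d" and outer: "outer_flags d = S" and flags: "flags d = S" and fin: "finite S"
  shows "\<exists>\<phi>. presents S v0 d \<phi>"
proof -
  have wf: "wf_graph d" using c by (simp add: connected_graph_def)
  have no_adj: "adj d = {}" using outer flags unfolding adj_def outer_flags_def by auto
  obtain w0 where w0: "w0 \<in> verts d" using c unfolding connected_graph_def by blast
  then have V: "verts d = {w0}" using c no_adj unfolding connected_graph_def by auto
  define \<phi> where "\<phi> = \<lparr> mV = (\<lambda>v. if v \<in> verts d then v0 else undefined),
     mF = (\<lambda>f. if f \<in> S then f else undefined), mI = (\<lambda>_. undefined) \<rparr>"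
  have "graph_iso (forget_edges d) (star S v0) \<phi>"
    by (rule graph_isoI[OF aggregate_wf[OF aggregate_forget_edges[OF wf]] aggregate_wf[OF aggregate_star[OF fin, of v0]]])
      (use wf_bd[OF wf] in \<open>auto simp: \<phi>_def V forget_edges_simps star_simps flags bij_betw_def inj_on_def\<close>)
  then have "ctd_morphism (forget_edges d) (star S v0) \<phi>"
    using aggregate_forget_edges[OF wf] aggregate_star[OF fin, of v0]
    by (intro ctd_morphism_agg_iso) (simp add: agg_iso_def)
  then show ?thesis unfolding presents_def using flags by (auto simp: \<phi>_def)
qed

lemma contract_edge_presents:
  assumes wf: "wf_graph d" and s: "s \<in> flags d" "s \<notin> S" and outer: "outer_flags d = S"
    and pres: "presents S v0 (contract_edge d s (gi d s)) \<phi>'"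
  shows "presents S v0 d (gcomp (forget_edges d) (forget_edges (contract_edge d s (gi d s))) (star S v0)
      \<phi>' (contract_edge_map d s (gi d s)))"
proof -
  define t where "t = gi d s"
  have edge: "t \<noteq> s" using s outer unfolding outer_flags_def t_def by blast
  note ctx = wf s(1) t_def[symmetric] edge
  let ?c = "contract_edge_map d s t" and ?d' = "contract_edge d s t"
  have ph': "ctd_morphism (forget_edges ?d') (star S v0) \<phi>'" and F': "\<forall>x\<in>S. mF \<phi>' x = x"
    and I': "\<forall>f\<in>flags ?d' - S. mI \<phi>' f = gi ?d' f" using pres unfolding presents_def t_def by auto
  have fl: "flags ?d' = flags d - {s, t}" by (simp add: contract_edge_simps)
  have tS: "t \<notin> S" using edge_partner_flag[OF ctx] edge_partner_back[OF ctx] edge outer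
    unfolding outer_flags_def by auto
  have S': "S \<subseteq> flags ?d'" unfolding fl using outer s tS unfolding outer_flags_def by blast
  have c_id: "mF ?c f = f" if "f \<in> flags ?d'" for f using that fl by (simp add: contract_edge_map_simps)
  have ctd: "ctd_morphism (forget_edges d) (star S v0) (gcomp (forget_edges d) (forget_edges ?d') (star S v0) \<phi>' ?c)"
    by (rule ctd_morphism_comp[OF contract_edge_map_ctd[OF ctx] ph'])
  have phc: "graph_morphism (forget_edges ?d') (star S v0) \<phi>'" using ctd_graph_morphism[OF ph'] .
  note c = contract_edge_map_morphism[OF ctx]
  have pairing: "mI (gcomp (forget_edges d) (forget_edges ?d') (star S v0) \<phi>' ?c) f = gi d f"
    if f: "f \<in> flags d - S" for f
  proof (cases "f \<in> flags ?d'")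
    case True
    have "f \<in> flags (forget_edges ?d') - mF \<phi>' ` flags (star S v0)"
      using True f F' by (simp add: forget_edges_simps star_simps)
    then have "mI (gcomp (forget_edges d) (forget_edges ?d') (star S v0) \<phi>' ?c) (mF ?c f) = mF ?c (mI \<phi>' f)"
      by (rule gcomp_mI_pulled[OF c phc])
    moreover have "gi d f \<in> flags ?d'" using gi_avoids_edge[OF ctx] True fl by blast
    ultimately show ?thesis
      using True f I' c_id by (simp add: contract_edge_simps)
  next
    case False
    then have st: "f = s \<or> f = t" using f unfolding fl by blast
    then have "f \<in> flags (forget_edges d) - mF ?c ` flags (forget_edges ?d')"
      using contract_edge_map_unpulled[OF ctx] by blast
    with st show ?thesis
      using gcomp_mI_unpulled[OF phc] edge edge_partner_back[OF ctx] t_def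
      by (auto simp: contract_edge_map_simps)
  qed
  have "mF (gcomp (forget_edges d) (forget_edges ?d') (star S v0) \<phi>' ?c) x = x" if "x \<in> S" for x
    using that S' F' c_id by (auto simp: gcomp_mF_in star_simps)
  then show ?thesis using ctd pairing unfolding presents_def t_def by blast
qed

lemma connected_graph_presents:
  assumes fin: "finite S" and "connected_graph d" and "outer_flags d = S"
  shows "\<exists>\<phi>. presents S v0 d \<phi>"
  using assms(2,3)
proof (induction "card (flags d)" arbitrary: d rule: less_induct)
  case less
  have wf: "wf_graph d" using less.prems by (simp add: connected_graph_def)
  show ?case
  proof (cases "flags d = S")
    case True
    then show ?thesis using edgeless_presents[OF less.prems True fin] by blast
  next
    case False
    then obtain s where s: "s \<in> flags d" "s \<notin> S" using less.prems(2) unfolding outer_flags_def by blast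
    have edge: "gi d s \<noteq> s" using s less.prems(2) unfolding outer_flags_def by blast
    note ctx = wf s(1) refl edge
    have "outer_flags (contract_edge d s (gi d s)) = S"
      unfolding outer_flags_contract_edge[OF ctx] less.prems(2)
      using s(2) edge_partner_flag[OF ctx] edge_partner_back[OF ctx] edge less.prems(2)
      unfolding outer_flags_def by auto
    then obtain \<phi>' where "presents S v0 (contract_edge d s (gi d s)) \<phi>'"
      using less.hyps[OF card_flags_contract_edge[OF ctx] connected_contract_edge[OF ctx less.prems(1)]]
      by blast
    then show ?thesis using contract_edge_presents[OF wf s less.prems(2)] by blast
  qed
qed

subsection \<open>Morphisms of glued graphs lie over the star\<close>

lemma glue_morphism_over_star_mI:
  assumes ph: "graph_morphism X (star S v0) \<phi>" and ph': "graph_morphism Y (star S v0) \<phi>'"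
    and ps: "graph_morphism (glue S X \<phi>) (glue S Y \<phi>') \<psi>"
    and outer: "mF \<psi> ` mF \<phi>' ` S = mF \<phi> ` S" and f: "f \<in> flags X - mF \<phi> ` S"
  shows "mI (gcomp X Y (star S v0) \<phi>' \<psi>) f = mI \<phi> f"
proof -
  have dom: "f \<in> flags X - mF \<psi> ` mF \<phi>' ` flags (star S v0)" using f outer by (simp add: star_simps)
  have glued: "gi (glue S X \<phi>) f = mI \<phi> f" "mI \<phi> f \<noteq> f" using glue_gi_unpulled[OF ph f] by blast+
  show ?thesis
  proof (cases "f \<in> mF \<psi> ` flags Y")
    case True
    then obtain g where g: "g \<in> flags Y" and fg: "f = mF \<psi> g" by blast
    have g': "g \<in> flags Y - mF \<phi>' ` S" using g f fg outer by blast
    have "gi (glue S X \<phi>) (mF \<psi> g) \<noteq> mF \<psi> g" using glued fg by simp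
    from gm_edges[OF ps _ this] g
    have "gi (glue S X \<phi>) (mF \<psi> g) = mF \<psi> (gi (glue S Y \<phi>') g)" by (simp add: glue_simps)
    then have "mI \<phi> f = mF \<psi> (mI \<phi>' g)" using glued fg glue_gi_unpulled(1)[OF ph' g'] by simp
    moreover have "mI (gcomp X Y (star S v0) \<phi>' \<psi>) f = mF \<psi> (mI \<phi>' g)"
      using gcomp_mI_in[OF dom fg g] gm_flags_inj[OF ps] by (simp add: glue_simps)
    ultimately show ?thesis by simp
  next
    case False
    then have "f \<in> flags (glue S X \<phi>) - mF \<psi> ` flags (glue S Y \<phi>')" using f by (simp add: glue_simps)
    then have "mI \<psi> f = gi (glue S X \<phi>) f" using gm_pairing_kind[OF ps] glued by metis
    then show ?thesis using gcomp_mI_out[OF dom False] glued by simp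
  qed
qed

text \<open>The vertex maps agree since the star has a single vertex; the pairings agree since both are read
  off the involution of the glued graph.\<close>
lemma glue_morphism_over_star:
  assumes ph: "graph_morphism X (star S v0) \<phi>" and ph': "graph_morphism Y (star S v0) \<phi>'"
    and ps: "graph_morphism (glue S X \<phi>) (glue S Y \<phi>') \<psi>"
    and F: "\<forall>s\<in>S. mF \<psi> (mF \<phi>' s) = mF \<phi> s"
  shows "gcomp X Y (star S v0) \<phi>' \<psi> = \<phi>"
proof (rule gmor.equality)
  have VX: "mV \<phi> ` verts X = {v0}" and VY: "mV \<phi>' ` verts Y = {v0}"
    using gm_verts_onto[OF ph] gm_verts_onto[OF ph'] unfolding star_simps .
  show "mV (gcomp X Y (star S v0) \<phi>' \<psi>) = mV \<phi>"
  proof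
    fix v show "mV (gcomp X Y (star S v0) \<phi>' \<psi>) v = mV \<phi> v"
    proof (cases "v \<in> verts X")
      case True
      have "mV \<psi> v \<in> verts Y" using gm_vert_in[OF ps] True by (simp add: glue_simps)
      then have "mV \<phi>' (mV \<psi> v) = v0" using VY by blast
      moreover have "mV \<phi> v = v0" using VX True by blast
      ultimately show ?thesis using True by (simp add: gcomp_mV_in)
    next
      case False
      then show ?thesis using gm_undef_verts[OF ph] by (simp add: gcomp_simps)
    qed
  qed
  show "mF (gcomp X Y (star S v0) \<phi>' \<psi>) = mF \<phi>"
    using F gm_undef_flags[OF ph] by (auto simp: gcomp_simps star_simps fun_eq_iff)
  have outer: "mF \<psi> ` mF \<phi>' ` S = mF \<phi> ` S"
    using F unfolding image_image by (intro image_cong) simp_all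
  show "mI (gcomp X Y (star S v0) \<phi>' \<psi>) = mI \<phi>"
  proof
    fix f
    show "mI (gcomp X Y (star S v0) \<phi>' \<psi>) f = mI \<phi> f"
    proof (cases "f \<in> flags X - mF \<phi> ` S")
      case True
      then show ?thesis by (rule glue_morphism_over_star_mI[OF ph ph' ps outer])
    next
      case False
      then show ?thesis
        using gcomp_mI_undef[of f X \<psi> \<phi>'] gm_undef_pairing[OF ph] outer by (simp add: star_simps)
    qed
  qed
qed simp

subsection \<open>The functor from the comma category to I_S\<close>

text \<open>pi inverts g on g ` S and exchanges the equinumerous leftovers S - g ` S and g ` S - S.\<close>
lemma finite_inj_on_extends_to_bij:
  fixes g :: "'a \<Rightarrow> 'a"
  assumes fin: "finite S" and inj: "inj_on g S"
  shows "\<exists>\<pi>. bij \<pi> \<and> (\<forall>s\<in>S. \<pi> (g s) = s)"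
proof -
  define A where "A = g ` S"
  have finA: "finite A" unfolding A_def using fin by simp
  have cA: "card A = card S" unfolding A_def using card_image[OF inj] .
  have c1: "card (S - A) = card (A - S)"
  proof -
    have "card (S - A) = card S - card (S \<inter> A)" using fin by (simp add: card_Diff_subset_Int)
    moreover have "card (A - S) = card A - card (A \<inter> S)" using finA by (simp add: card_Diff_subset_Int)
    ultimately show ?thesis using cA by (simp add: Int_commute)
  qed
  obtain k where k: "bij_betw k (S - A) (A - S)"
    using finite_same_card_bij[of "S - A" "A - S"] fin finA c1 by auto
  define \<pi> where "\<pi> x = (if x \<in> A then inv_into S g x else if x \<in> S - A then k x else x)" for x
  have b1: "bij_betw \<pi> A S"
  proof -
    have "bij_betw g S A" unfolding A_def using inj by (simp add: bij_betw_def)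
    then have "bij_betw (inv_into S g) A S" by (rule bij_betw_inv_into)
    then show ?thesis by (rule bij_betw_cong[THEN iffD1, rotated]) (simp add: \<pi>_def)
  qed
  have b2: "bij_betw \<pi> (S - A) (A - S)"
    using k by (rule bij_betw_cong[THEN iffD1, rotated]) (simp add: \<pi>_def)
  have b3: "bij_betw \<pi> (- (A \<union> S)) (- (A \<union> S))"
    by (rule bij_betw_cong[THEN iffD1, rotated, of id]) (auto simp: \<pi>_def)
  have b12: "bij_betw \<pi> (A \<union> (S - A)) (S \<union> (A - S))"
    by (rule bij_betw_combine[OF b1 b2]) blast
  have b123: "bij_betw \<pi> ((A \<union> (S - A)) \<union> - (A \<union> S)) ((S \<union> (A - S)) \<union> - (A \<union> S))"
    by (rule bij_betw_combine[OF b12 b3]) blast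
  have u1: "(A \<union> (S - A)) \<union> - (A \<union> S) = UNIV" by blast
  have u2: "(S \<union> (A - S)) \<union> - (A \<union> S) = UNIV" by blast
  have "bij \<pi>" using b123 unfolding u1 u2 .
  moreover have "\<forall>s\<in>S. \<pi> (g s) = s" using inj by (simp add: \<pi>_def A_def inv_into_f_f)
  ultimately show ?thesis by blast
qed

text \<open>Choosing the identity whenever phi already fixes S makes the graph of a presenting object
  (forget_edges d, phi) equal to d itself, not just isomorphic.\<close>
definition outer_relabelling :: "'f set \<Rightarrow> ('f,'v) graph \<times> ('f,'v) gmor \<Rightarrow> 'f \<Rightarrow> 'f" where
  "outer_relabelling S a = (SOME \<pi>. bij \<pi> \<and> (\<forall>s\<in>S. \<pi> (mF (snd a) s) = s) \<and>
     ((\<forall>s\<in>S. mF (snd a) s = s) \<longrightarrow> \<pi> = id))"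

definition graph_of :: "'f set \<Rightarrow> ('f,'v) graph \<times> ('f,'v) gmor \<Rightarrow> ('f,'v) graph" where
  "graph_of S a = relabel (outer_relabelling S a) (glue S (fst a) (snd a))"

definition graph_hom :: "'f set \<Rightarrow> ('f,'v) graph \<times> ('f,'v) gmor \<Rightarrow> ('f,'v) graph \<times> ('f,'v) gmor \<Rightarrow>
    ('f,'v) gmor \<Rightarrow> ('f,'v) gmor" where
  "graph_hom S a b \<psi> = gcomp (graph_of S a) (glue S (fst a) (snd a)) (graph_of S b)
     (gcomp (glue S (fst a) (snd a)) (glue S (fst b) (snd b)) (graph_of S b)
        (relabel_to (outer_relabelling S b) (glue S (fst b) (snd b))) \<psi>)
     (relabel_from (outer_relabelling S a) (glue S (fst a) (snd a)))"

lemma outer_relabelling: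
  assumes fin: "finite S" and inj: "inj_on (mF (snd a)) S"
  shows "bij (outer_relabelling S a)" "\<forall>s\<in>S. outer_relabelling S a (mF (snd a) s) = s"
    "(\<forall>s\<in>S. mF (snd a) s = s) \<Longrightarrow> outer_relabelling S a = id"
proof -
  have "\<exists>\<pi>. bij \<pi> \<and> (\<forall>s\<in>S. \<pi> (mF (snd a) s) = s) \<and> ((\<forall>s\<in>S. mF (snd a) s = s) \<longrightarrow> \<pi> = id)"
  proof (cases "\<forall>s\<in>S. mF (snd a) s = s")
    case True
    then show ?thesis by (intro exI[of _ id]) simp
  next
    case False
    then show ?thesis using finite_inj_on_extends_to_bij[OF fin inj] by blast
  qed
  from someI_ex[OF this] show "bij (outer_relabelling S a)" "\<forall>s\<in>S. outer_relabelling S a (mF (snd a) s) = s"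
    "(\<forall>s\<in>S. mF (snd a) s = s) \<Longrightarrow> outer_relabelling S a = id"
    unfolding outer_relabelling_def by blast+
qed

context
  fixes S :: "'f set" and v0 :: 'v
  assumes fin: "finite S"
begin

abbreviation "glued a \<equiv> glue S (fst a) (snd a)"
abbreviation "relabel_to_of a \<equiv> relabel_to (outer_relabelling S a) (glued a)"
abbreviation "relabel_from_of a \<equiv> relabel_from (outer_relabelling S a) (glued a)"

lemma comma_obD:
  assumes a: "comma_ob S v0 a"
  shows comma_ob_aggregate: "aggregate (fst a)"
    and comma_ob_ctd: "ctd_morphism (fst a) (star S v0) (snd a)"
    and comma_ob_morphism: "graph_morphism (fst a) (star S v0) (snd a)"
    and comma_ob_relabelling: "bij (outer_relabelling S a)"
    and comma_ob_relabelling_outer: "s \<in> S \<Longrightarrow> outer_relabelling S a (mF (snd a) s) = s"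
proof -
  show "aggregate (fst a)" "ctd_morphism (fst a) (star S v0) (snd a)"
    using a by (simp_all add: comma_ob_def)
  then show ph: "graph_morphism (fst a) (star S v0) (snd a)" by (simp add: ctd_graph_morphism)
  have "inj_on (mF (snd a)) S" using gm_flags_inj[OF ph] unfolding star_simps .
  from outer_relabelling[OF fin this]
  show "bij (outer_relabelling S a)" "s \<in> S \<Longrightarrow> outer_relabelling S a (mF (snd a) s) = s" by blast+
qed

lemma IS_ob_graph_of:
  assumes a: "comma_ob S v0 a"
  shows "IS_ob S (graph_of S a)"
  unfolding IS_ob_def graph_of_def
proof
  note b = comma_ob_relabelling[OF a] and ph = comma_ob_morphism[OF a]
  show "connected_graph (relabel (outer_relabelling S a) (glued a))"
    by (rule connected_relabel[OF b connected_glue[OF comma_ob_ctd[OF a]]])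
  have "outer_relabelling S a ` mF (snd a) ` S = S"
    using comma_ob_relabelling_outer[OF a] unfolding image_image by simp
  then show "outer_flags (relabel (outer_relabelling S a) (glued a)) = S"
    unfolding outer_flags_relabel[OF b wf_glue[OF ph]] outer_flags_glue[OF ph] .
qed

lemma comma_ob_relabel:
  assumes a: "comma_ob S v0 a"
  shows comma_ob_relabel_to_iso: "graph_iso (glued a) (graph_of S a) (relabel_to_of a)"
    and comma_ob_relabel_from_iso: "graph_iso (graph_of S a) (glued a) (relabel_from_of a)"
    and comma_ob_relabel_from_to: "gcomp (glued a) (graph_of S a) (glued a) (relabel_from_of a) (relabel_to_of a) = gid (glued a)"
    and comma_ob_relabel_to_from: "gcomp (graph_of S a) (glued a) (graph_of S a) (relabel_to_of a) (relabel_from_of a) = gid (graph_of S a)"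
  unfolding graph_of_def
  using relabel_to_iso[OF comma_ob_relabelling[OF a] wf_glue[OF comma_ob_morphism[OF a]]]
    relabel_from_iso[OF comma_ob_relabelling[OF a] wf_glue[OF comma_ob_morphism[OF a]]]
    relabel_from_to[OF comma_ob_relabelling[OF a]] relabel_to_from[OF comma_ob_relabelling[OF a]]
  by blast+

lemma comma_ob_outer_label:
  assumes a: "comma_ob S v0 a" and s: "s \<in> S"
  shows "mF (snd a) s \<in> flags (glued a)" "s \<in> flags (graph_of S a)"
    "mF (relabel_to_of a) s = mF (snd a) s" "mF (relabel_from_of a) (mF (snd a) s) = s"
proof -
  have b: "bij (outer_relabelling S a)" and p: "outer_relabelling S a (mF (snd a) s) = s"
    using comma_ob_relabelling[OF a] comma_ob_relabelling_outer[OF a s] .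
  show m: "mF (snd a) s \<in> flags (glued a)"
    using gm_flag_in[OF comma_ob_morphism[OF a]] s by (simp add: star_simps glue_simps)
  then show "s \<in> flags (graph_of S a)" using p by (force simp: graph_of_def relabel_simps)
  then show "mF (relabel_to_of a) s = mF (snd a) s"
    using relabel_inv_simps(1)[OF b, of "mF (snd a) s"] p by (simp add: relabel_to_simps graph_of_def relabel_simps)
  show "mF (relabel_from_of a) (mF (snd a) s) = s" using m p by (simp add: relabel_from_simps)
qed

lemma comma_hom_glue:
  assumes h: "comma_hom S v0 a b f"
  shows "spanning_forest_morphism (glued a) (glued b) f"
proof -
  have b: "comma_ob S v0 b" and fo: "forest_morphism (fst a) (fst b) f"
    and over: "gcomp (fst a) (fst b) (star S v0) (snd b) f = snd a"
    using h unfolding comma_hom_def by blast+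
  show ?thesis using forest_glue_spanning_forest[OF fo comma_ob_ctd[OF b]] unfolding over .
qed

lemma IS_hom_graph_hom:
  assumes h: "comma_hom S v0 a b f"
  shows "IS_hom S (graph_of S a) (graph_of S b) (graph_hom S a b f)"
proof -
  have a: "comma_ob S v0 a" and b: "comma_ob S v0 b" and over: "gcomp (fst a) (fst b) (star S v0) (snd b) f = snd a"
    using h by (simp_all add: comma_hom_def)
  have sf: "spanning_forest_morphism (graph_of S a) (graph_of S b) (graph_hom S a b f)"
    unfolding graph_hom_def
    by (rule spanning_forest_comp[OF spanning_forest_iso[OF comma_ob_relabel_from_iso[OF a]]
          spanning_forest_comp[OF comma_hom_glue[OF h] spanning_forest_iso[OF comma_ob_relabel_to_iso[OF b]]]])
  have "mF (graph_hom S a b f) s = s" if s: "s \<in> S" for s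
  proof -
    have "mF (graph_hom S a b f) s = mF (relabel_from_of a) (mF f (mF (relabel_to_of b) s))"
      unfolding graph_hom_def using comma_ob_outer_label(2)[OF b s] by (simp add: gcomp_mF_in)
    also have "mF (relabel_to_of b) s = mF (snd b) s" by (rule comma_ob_outer_label(3)[OF b s])
    also have "mF f (mF (snd b) s) = mF (snd a) s"
      using arg_cong[OF over, of "\<lambda>p. mF p s"] s by (simp add: gcomp_mF_in star_simps)
    also have "mF (relabel_from_of a) (mF (snd a) s) = s" by (rule comma_ob_outer_label(4)[OF a s])
    finally show ?thesis .
  qed
  then show ?thesis unfolding IS_hom_def
    using IS_ob_graph_of[OF a] IS_ob_graph_of[OF b] sf spanning_forest_graph_morphism[OF sf] by blast
qed

lemma graph_hom_id:
  assumes a: "comma_ob S v0 a"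
  shows "graph_hom S a a (comma_id a) = gid (graph_of S a)"
proof -
  have "comma_id a = gid (glued a)" unfolding comma_id_def by (rule gid_cong) (simp_all add: glue_simps)
  then show ?thesis unfolding graph_hom_def
    using gcomp_conj_id[OF graph_iso_morphism[OF comma_ob_relabel_to_iso[OF a]] comma_ob_relabel_to_from[OF a]] by simp
qed

lemma graph_hom_comp:
  assumes f: "comma_hom S v0 a b f" and g: "comma_hom S v0 b c g"
  shows "graph_hom S a c (comma_comp a b c g f) =
    gcomp (graph_of S a) (graph_of S b) (graph_of S c) (graph_hom S b c g) (graph_hom S a b f)"
proof -
  have a: "comma_ob S v0 a" and b: "comma_ob S v0 b" and c: "comma_ob S v0 c"
    using f g by (simp_all add: comma_hom_def)
  have comp: "comma_comp a b c g f = gcomp (glued a) (glued b) (glued c) g f"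
    unfolding comma_comp_def by (rule fun_cong[OF fun_cong[OF gcomp_cong]]) (simp_all add: glue_simps)
  show ?thesis unfolding comp graph_hom_def
    by (rule gcomp_conj_comp[OF spanning_forest_graph_morphism[OF comma_hom_glue[OF f]]
        spanning_forest_graph_morphism[OF comma_hom_glue[OF g]]
        graph_iso_morphism[OF comma_ob_relabel_from_iso[OF a]] graph_iso_morphism[OF comma_ob_relabel_to_iso[OF b]]
        graph_iso_morphism[OF comma_ob_relabel_from_iso[OF b]] graph_iso_morphism[OF comma_ob_relabel_to_iso[OF c]]
        comma_ob_relabel_from_to[OF b]])
qed

lemma graph_hom_cancel:
  assumes a: "comma_ob S v0 a" and b: "comma_ob S v0 b" and f: "graph_morphism (glued a) (glued b) f"
  shows "gcomp (glued a) (graph_of S a) (glued b) (gcomp (graph_of S a) (graph_of S b) (glued b) (relabel_from_of b)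
      (graph_hom S a b f)) (relabel_to_of a) = f"
  unfolding graph_hom_def
  by (rule gcomp_conj_cancel[OF f graph_iso_morphism[OF comma_ob_relabel_to_iso[OF a]]
        graph_iso_morphism[OF comma_ob_relabel_from_iso[OF a]] graph_iso_morphism[OF comma_ob_relabel_to_iso[OF b]]
        graph_iso_morphism[OF comma_ob_relabel_from_iso[OF b]] comma_ob_relabel_from_to[OF a] comma_ob_relabel_from_to[OF b]])

lemma graph_hom_inj:
  assumes f: "comma_hom S v0 a b f" and g: "comma_hom S v0 a b g"
    and eq: "graph_hom S a b f = graph_hom S a b g"
  shows "f = g"
proof -
  have a: "comma_ob S v0 a" and b: "comma_ob S v0 b" using f by (simp_all add: comma_hom_def)
  show ?thesis
    using graph_hom_cancel[OF a b spanning_forest_graph_morphism[OF comma_hom_glue[OF f]]]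
      graph_hom_cancel[OF a b spanning_forest_graph_morphism[OF comma_hom_glue[OF g]]]
    unfolding eq by (rule trans[OF sym])
qed

lemma graph_hom_surj:
  assumes a: "comma_ob S v0 a" and b: "comma_ob S v0 b" and h: "IS_hom S (graph_of S a) (graph_of S b) h"
  shows "\<exists>f. comma_hom S v0 a b f \<and> graph_hom S a b f = h"
proof -
  have hg: "graph_morphism (graph_of S a) (graph_of S b) h"
    and hs: "spanning_forest_morphism (graph_of S a) (graph_of S b) h"
    and hf: "\<forall>s\<in>S. mF h s = s" using h by (simp_all add: IS_hom_def)
  define \<psi> where "\<psi> = gcomp (glued a) (graph_of S a) (glued b) (gcomp (graph_of S a) (graph_of S b) (glued b) (relabel_from_of b) h) (relabel_to_of a)"
  have "graph_hom S a b \<psi> = h" unfolding graph_hom_def \<psi>_def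
    by (rule gcomp_conj_cancel[OF hg graph_iso_morphism[OF comma_ob_relabel_from_iso[OF a]]
          graph_iso_morphism[OF comma_ob_relabel_to_iso[OF a]] graph_iso_morphism[OF comma_ob_relabel_from_iso[OF b]]
          graph_iso_morphism[OF comma_ob_relabel_to_iso[OF b]] comma_ob_relabel_to_from[OF a] comma_ob_relabel_to_from[OF b]])
  moreover have sf: "spanning_forest_morphism (glued a) (glued b) \<psi>" unfolding \<psi>_def
    by (rule spanning_forest_comp[OF spanning_forest_iso[OF comma_ob_relabel_to_iso[OF a]]
          spanning_forest_comp[OF hs spanning_forest_iso[OF comma_ob_relabel_from_iso[OF b]]]])
  have "forest_morphism (fst a) (fst b) \<psi>"
    using spanning_forest_forget_edges[OF sf]
    unfolding forget_edges_glue forget_edges_aggregate[OF comma_ob_aggregate[OF a]]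
      forget_edges_aggregate[OF comma_ob_aggregate[OF b]] .
  moreover have "mF \<psi> (mF (snd b) s) = mF (snd a) s" if s: "s \<in> S" for s
  proof -
    have "mF \<psi> (mF (snd b) s) = mF (relabel_to_of a) (mF h (mF (relabel_from_of b) (mF (snd b) s)))"
      unfolding \<psi>_def using comma_ob_outer_label(1)[OF b s] by (simp add: gcomp_mF_in)
    also have "mF (relabel_from_of b) (mF (snd b) s) = s" by (rule comma_ob_outer_label(4)[OF b s])
    also have "mF h s = s" using hf s by blast
    also have "mF (relabel_to_of a) s = mF (snd a) s" by (rule comma_ob_outer_label(3)[OF a s])
    finally show ?thesis .
  qed
  then have "gcomp (fst a) (fst b) (star S v0) (snd b) \<psi> = snd a"
    using glue_morphism_over_star[OF comma_ob_morphism[OF a] comma_ob_morphism[OF b]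
        spanning_forest_graph_morphism[OF sf]] by blast
  ultimately show ?thesis unfolding comma_hom_def using a b by blast
qed

lemma glue_forget_edges:
  assumes wf: "wf_graph d" and outer: "outer_flags d = S" and pres: "presents S v0 d \<phi>"
  shows "glue S (forget_edges d) \<phi> = d"
proof -
  have "\<forall>s\<in>S. mF \<phi> s = s" and pairing: "\<forall>f\<in>flags d - S. mI \<phi> f = gi d f"
    using pres unfolding presents_def by blast+
  then have "mF \<phi> ` S = S" by simp
  then have "gi (glue S (forget_edges d) \<phi>) = gi d"
    using outer pairing wf_undef_gi[OF wf]
    by (auto simp: fun_eq_iff glue_simps forget_edges_simps outer_flags_def)
  then show ?thesis unfolding glue_def forget_edges_def by simp
qed

lemma graph_of_essentially_surj:
  assumes d: "IS_ob S d"
  shows "\<exists>a u v. comma_ob S v0 a \<and> IS_hom S (graph_of S a) d u \<and> IS_hom S d (graph_of S a) v \<and>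
    gcomp (graph_of S a) d (graph_of S a) v u = gid (graph_of S a) \<and> gcomp d (graph_of S a) d u v = gid d"
proof -
  have c: "connected_graph d" and outer: "outer_flags d = S" using d by (simp_all add: IS_ob_def)
  have wf: "wf_graph d" using c by (simp add: connected_graph_def)
  obtain \<phi> where pres: "presents S v0 d \<phi>" using connected_graph_presents[OF fin c outer] by blast
  have ctd: "ctd_morphism (forget_edges d) (star S v0) \<phi>" using pres unfolding presents_def by blast
  define a where "a = (forget_edges d, \<phi>)"
  have a: "comma_ob S v0 a" unfolding comma_ob_def a_def using aggregate_forget_edges[OF wf] ctd by simp
  have "outer_relabelling S a = id"
    using outer_relabelling(3)[OF fin gm_flags_inj[OF comma_ob_morphism[OF a], unfolded star_simps]] pres
    by (simp add: a_def presents_def)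
  then have "graph_of S a = d"
    unfolding graph_of_def using glue_forget_edges[OF wf outer pres] relabel_id[OF wf] by (simp add: a_def)
  moreover have "IS_hom S d d (gid d)"
    unfolding IS_hom_def using d outer gid_iso[OF wf] spanning_forest_iso[OF gid_iso[OF wf]]
    by (auto simp: gid_simps graph_iso_morphism outer_flags_def)
  moreover have "gcomp d d d (gid d) (gid d) = gid d"
    by (rule gcomp_id_left[OF graph_iso_morphism[OF gid_iso[OF wf]]])
  ultimately show ?thesis using a by (intro exI[of _ a] exI[of _ "gid d"]) simp
qed

end

theorem proposition5p5:
  fixes S :: "'f set" and v0 :: 'v
  assumes "finite S"
  shows "equivalent_cats
           (comma_ob S v0) (comma_hom S v0) comma_id comma_comp
           (IS_ob S :: ('f,'v) graph \<Rightarrow> bool) (IS_hom S) gid (\<lambda>G H K q p. gcomp G H K q p)"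
  unfolding equivalent_cats_def
proof (intro exI[of _ "graph_of S"] exI[of _ "graph_hom S"] conjI allI impI)
  show "IS_ob S (graph_of S a)" if "comma_ob S v0 a" for a
    using IS_ob_graph_of[OF assms that] .
  show "IS_hom S (graph_of S a) (graph_of S b) (graph_hom S a b f)" if "comma_hom S v0 a b f" for a b f
    using IS_hom_graph_hom[OF assms that] .
  show "graph_hom S a a (comma_id a) = gid (graph_of S a)" if "comma_ob S v0 a" for a
    using graph_hom_id[OF assms that] .
  show "graph_hom S a c (comma_comp a b c g f) =
      gcomp (graph_of S a) (graph_of S b) (graph_of S c) (graph_hom S b c g) (graph_hom S a b f)"
    if "comma_hom S v0 a b f" "comma_hom S v0 b c g" for a b c f g
    using graph_hom_comp[OF assms that] .
  show "f = g" if "comma_hom S v0 a b f" "comma_hom S v0 a b g" "graph_hom S a b f = graph_hom S a b g"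
    for a b f g
    using graph_hom_inj[OF assms that] .
  show "\<exists>f. comma_hom S v0 a b f \<and> graph_hom S a b f = h"
    if "comma_ob S v0 a" "comma_ob S v0 b" "IS_hom S (graph_of S a) (graph_of S b) h" for a b h
    using graph_hom_surj[OF assms that] .
  show "\<exists>a u v. comma_ob S v0 a \<and> IS_hom S (graph_of S a) d u \<and> IS_hom S d (graph_of S a) v \<and>
      gcomp (graph_of S a) d (graph_of S a) v u = gid (graph_of S a) \<and> gcomp d (graph_of S a) d u v = gid d"
    if "IS_ob S d" for d
    using graph_of_essentially_surj[OF assms that] .
qed

end
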